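(* Let $d\ge2$ be an integer with prime factorisation $d=\prod_{i=1}^r p_i^{m_i}$ ($p_i$ distinct primes, $m_i\ge1$), and let $n\ge1$, $0\le k<n$. Then the number of $[[n,k]]_d$ stabilizer codes satisfies $$N(n,k,d)=\prod_{i=1}^r N(n,k,p_i^{m_i}),$$ and consequently $$N(n,k,d)=d^{\frac{(n-k)(n+3k+1)}{2}}\prod_{i=1}^r\zeta_i,\qquad \zeta_i:=\prod_{j=0}^{n-k-1}\frac{1-p_i^{-2(n-j)}}{1-p_i^{-(n-k-j)}}.$$
   Context: $N(n,k,q)$ denotes the number of $[[n,k]]_q$ stabilizer codes for qudits of dimension $q$ with configuration space $\mathbb{Z}_q$ (integers mod $q$). Definitions: $\Lambda=\begin{pmatrix}0&I_n\\-I_n&0\end{pmatrix}$; on $\mathbb{C}^q$ with basis $\{|j\rangle\}_{j\in\mathbb{Z}_q}$, $X|j\rangle=|j+1\rangle$, $Z|j\rangle=\omega^j|j\rangle$, $\omega=e^{2\pi i/q}$; the $n$-qudit Pauli group is generated by the $X_j,Z_j$ (and $e^{\pi i/q}I$ if $q$ even), each Pauli being a phase times $g(a)=X^{u_1}Z^{v_1}\otimes\cdots\otimes X^{u_n}Z^{v_n}$, $a=(u,v)\in\mathbb{Z}_q^{2n}$, with $g(a),g(b)$ commuting iff $a^T\Lambda b=0$. An $[[n,k]]_q$ stabilizer group is $S=\langle g_1,\dots,g_{n-k}\rangle$ of pairwise commuting Paulis each with eigenvalue $+1$ and $|S|=q^{n-k}$; its check matrix is $H=[a_1|\cdots|a_{n-k}]$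 with $g_j$ a phase times $g(a_j)$. Two stabilizer groups define the same stabilizer code iff their check matrices satisfy $H'=HA$ for some invertible $A$ over $\mathbb{Z}_q$; equivalently a code is the subgroup of $\mathbb{Z}_q^{2n}$ spanned by $n-k$ linearly independent (over $\mathbb{Z}_q$: $\sum x_ja_j=0\Rightarrow$ all $x_j=0$), pairwise symplectically orthogonal vectors. *)

theory Defs
  imports Complex_Main "HOL-Computational_Algebra.Primes"
begin

text \<open>Vectors of Z_q^{2n} are represented as functions nat => int whose
  coordinates 0..2n-1 lie in {0..<q} and which vanish elsewhere.
  Coordinates 0..n-1 are the u-part (X exponents), n..2n-1 the v-part (Z exponents).\<close>

definition zvec :: "int \<Rightarrow> nat \<Rightarrow> (nat \<Rightarrow> int) set" where
  "zvec q n = {a. (\<forall>i<2*n. 0 \<le> a i \<and> a i < q) \<and> (\<forall>i\<ge>2*n. a i = 0)}"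

text \<open>Symplectic form a^T Lambda b over Z_q, with Lambda = [[0,I],[-I,0]].\<close>
definition symp :: "int \<Rightarrow> nat \<Rightarrow> (nat \<Rightarrow> int) \<Rightarrow> (nat \<Rightarrow> int) \<Rightarrow> int" where
  "symp q n a b = (\<Sum>i<n. a i * b (n+i) - a (n+i) * b i) mod q"

definition lincomb :: "int \<Rightarrow> nat \<Rightarrow> nat \<Rightarrow> (nat \<Rightarrow> int) \<Rightarrow> (nat \<Rightarrow> nat \<Rightarrow> int) \<Rightarrow> (nat \<Rightarrow> int)" where
  "lincomb q n m x a = (\<lambda>i. if i < 2*n then (\<Sum>j<m. x j * a j i) mod q else 0)"

definition zspan :: "int \<Rightarrow> nat \<Rightarrow> nat \<Rightarrow> (nat \<Rightarrow> nat \<Rightarrow> int) \<Rightarrow> (nat \<Rightarrow> int) set" where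
  "zspan q n m a = {lincomb q n m x a | x. True}"

definition zindep :: "int \<Rightarrow> nat \<Rightarrow> nat \<Rightarrow> (nat \<Rightarrow> nat \<Rightarrow> int) \<Rightarrow> bool" where
  "zindep q n m a = (\<forall>x. lincomb q n m x a = (\<lambda>_. 0) \<longrightarrow> (\<forall>j<m. x j mod q = 0))"

definition stab_codes :: "nat \<Rightarrow> nat \<Rightarrow> int \<Rightarrow> (nat \<Rightarrow> int) set set" where
  "stab_codes n k q = {C. \<exists>a. (\<forall>j<n-k. a j \<in> zvec q n) \<and> zindep q n (n-k) a
      \<and> (\<forall>j<n-k. \<forall>l<n-k. symp q n (a j) (a l) = 0) \<and> C = zspan q n (n-k) a}"

definition Ncodes :: "nat \<Rightarrow> nat \<Rightarrow> nat \<Rightarrow> nat" where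
  "Ncodes n k q = card (stab_codes n k (int q))"

end

theory Submission
  imports Defs "HOL-Library.Real_Mod"
begin

text \<open>
  The count is carried out for an arbitrary modulus \<open>q > 1\<close>. A code is the span of an
  isotropic frame (\<open>n - k\<close> independent, pairwise symplectically orthogonal vectors), and
  the frames spanning a given code are its images under \<open>GL(n - k, \<int>\<^sub>q)\<close>, so
  \<open>N(n, k, q)\<close> is the number of isotropic frames divided by the number of independent
  frames of \<open>\<int>\<^sub>q^(n - k)\<close>. Both are counted one vector at a time.

  If \<open>a\<^sub>0, \<dots>, a\<^sub>j\<^sub>-\<^sub>1\<close> are independent, then \<open>v \<mapsto> (\<langle>a\<^sub>i, v\<rangle>)\<^sub>i\<close> maps onto
  \<open>\<int>\<^sub>q^j\<close> (a character sum argument). This yields a retraction of the ambient module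
  \<open>V\<close> onto \<open>\<int>\<^sub>q^j\<close>, hence a splitting \<open>V \<cong> \<int>\<^sub>q^j \<times> K\<close>, and \<open>v\<close> extends the frame
  iff its \<open>K\<close>-component has order exactly \<open>q\<close>. When the \<open>c\<close>-torsion of \<open>V\<close> has \<open>c^r\<close>
  elements for every divisor \<open>c\<close> of \<open>q\<close>, that of \<open>K\<close> has \<open>c^(r - j)\<close>, and
  inclusion-exclusion over the primes of \<open>q\<close> counts the admissible \<open>v\<close> as
  \<open>q^j * q^(r - j) * \<Prod>p. (1 - p^-(r - j))\<close>. The quotient of the two products is the
  closed formula, which is visibly multiplicative in \<open>q\<close>.
\<close>

lemma card_eq_card_image_mult_fibre:
  assumes "finite A" and "\<And>y. y \<in> f ` A \<Longrightarrow> card {x\<in>A. f x = y} = c"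
  shows "card A = card (f ` A) * c"
proof -
  have "card A = card (\<Union>y\<in>f ` A. {x\<in>A. f x = y})" by (rule arg_cong[of _ _ card]) auto
  also have "\<dots> = (\<Sum>y\<in>f ` A. card {x\<in>A. f x = y})"
    using assms(1) by (intro card_UN_disjoint) auto
  also have "\<dots> = card (f ` A) * c" using assms(2) by simp
  finally show ?thesis .
qed

section \<open>Vectors and submodules of \<open>\<int>\<^sub>q\<^sup>N\<close>\<close>

definition tuples :: "nat \<Rightarrow> 'a set \<Rightarrow> 'a \<Rightarrow> (nat \<Rightarrow> 'a) set" where
  "tuples N S d = {a. (\<forall>i<N. a i \<in> S) \<and> (\<forall>i\<ge>N. a i = d)}"

lemma tuples_Suc: "tuples (Suc N) S d = (\<lambda>(a, t). a(N := t)) ` (tuples N S d \<times> S)"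
proof (rule set_eqI, rule iffI)
  fix b assume b: "b \<in> tuples (Suc N) S d"
  then have "(b(N := d), b N) \<in> tuples N S d \<times> S" unfolding tuples_def by auto
  moreover have "b = (\<lambda>(a, t). a(N := t)) (b(N := d), b N)" by simp
  ultimately show "b \<in> (\<lambda>(a, t). a(N := t)) ` (tuples N S d \<times> S)" by blast
qed (auto simp: tuples_def less_Suc_eq)

lemma finite_card_tuples:
  assumes "finite S"
  shows "finite (tuples N S d) \<and> card (tuples N S d) = card S ^ N"
proof (induction N)
  case 0
  have "tuples 0 S d = {\<lambda>_. d}" unfolding tuples_def by auto
  then show ?case by simp
next
  case (Suc N)
  have "inj_on (\<lambda>(a, t). a(N := t)) (tuples N S d \<times> S)"
  proof (rule inj_onI, clarsimp)
    fix a t a' t' assume "a \<in> tuples N S d" "a' \<in> tuples N S d" and eq: "a(N := t) = a'(N := t')"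
    then have "a i = a' i" for i
      unfolding tuples_def by (cases "i = N") (auto dest: fun_cong[of _ _ i])
    then show "a = a' \<and> t = t'" using eq by (metis fun_upd_same ext)
  qed
  then show ?case
    using Suc assms by (simp add: tuples_Suc card_image card_cartesian_product)
qed

definition vecs_mod :: "int \<Rightarrow> nat \<Rightarrow> (nat \<Rightarrow> int) set" where
  "vecs_mod q N = tuples N {0..<q} 0"

lemma vecs_mod_iff: "v \<in> vecs_mod q N \<longleftrightarrow> (\<forall>i<N. 0 \<le> v i \<and> v i < q) \<and> (\<forall>i\<ge>N. v i = 0)"
  unfolding vecs_mod_def tuples_def by auto

lemma finite_vecs_mod: "finite (vecs_mod q N)"
  and card_vecs_mod: "card (vecs_mod q N) = nat q ^ N"
  using finite_card_tuples[of "{0..<q}" N 0] unfolding vecs_mod_def by auto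

abbreviation zero_vec :: "nat \<Rightarrow> int" where
  "zero_vec \<equiv> \<lambda>_. 0"

definition reduce :: "int \<Rightarrow> nat \<Rightarrow> (nat \<Rightarrow> int) \<Rightarrow> nat \<Rightarrow> int" where
  "reduce q N f = (\<lambda>i. if i < N then f i mod q else 0)"

lemma reduce_apply: "i < N \<Longrightarrow> reduce q N f i = f i mod q"
  unfolding reduce_def by simp

lemma reduce_in_vecs_mod: "q > 0 \<Longrightarrow> reduce q N f \<in> vecs_mod q N"
  unfolding reduce_def vecs_mod_iff by auto

lemma reduce_vecs_mod: "v \<in> vecs_mod q N \<Longrightarrow> reduce q N v = v"
  unfolding reduce_def vecs_mod_iff by (auto intro!: ext)

lemma reduce_eq_iff: "reduce q N f = reduce q N g \<longleftrightarrow> (\<forall>i<N. f i mod q = g i mod q)"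
  unfolding reduce_def by (auto simp: fun_eq_iff)

lemma reduce_eq_zero_iff: "reduce q N f = zero_vec \<longleftrightarrow> (\<forall>i<N. f i mod q = 0)"
  unfolding reduce_def by (auto simp: fun_eq_iff)

lemma reduce_zero_vec [simp]: "reduce q N zero_vec = zero_vec"
  by (simp add: reduce_eq_zero_iff)

lemma vecs_mod_eq_iff:
  "u \<in> vecs_mod q N \<Longrightarrow> v \<in> vecs_mod q N \<Longrightarrow> u = v \<longleftrightarrow> (\<forall>i<N. u i mod q = v i mod q)"
  by (metis reduce_vecs_mod reduce_eq_iff)

lemma vecs_mod_eqI:
  "u \<in> vecs_mod q N \<Longrightarrow> v \<in> vecs_mod q N \<Longrightarrow> (\<And>i. i < N \<Longrightarrow> u i mod q = v i mod q) \<Longrightarrow> u = v"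
  using vecs_mod_eq_iff by blast

lemma vecs_mod_eq_zero_iff: "v \<in> vecs_mod q N \<Longrightarrow> v = zero_vec \<longleftrightarrow> (\<forall>i<N. v i mod q = 0)"
  by (metis reduce_vecs_mod reduce_eq_zero_iff)

lemma zero_vec_in_vecs_mod: "q > 0 \<Longrightarrow> zero_vec \<in> vecs_mod q N"
  unfolding vecs_mod_iff by simp

lemma sum_mod_cong:
  fixes f g :: "'a \<Rightarrow> int"
  assumes "\<And>i. i \<in> I \<Longrightarrow> f i mod q = g i mod q"
  shows "(\<Sum>i\<in>I. f i) mod q = (\<Sum>i\<in>I. g i) mod q"
  by (metis (mono_tags, lifting) assms mod_sum_eq sum.cong)

definition vadd :: "int \<Rightarrow> nat \<Rightarrow> (nat \<Rightarrow> int) \<Rightarrow> (nat \<Rightarrow> int) \<Rightarrow> nat \<Rightarrow> int" where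
  "vadd q N u v = reduce q N (\<lambda>i. u i + v i)"

definition vscale :: "int \<Rightarrow> nat \<Rightarrow> int \<Rightarrow> (nat \<Rightarrow> int) \<Rightarrow> nat \<Rightarrow> int" where
  "vscale q N c v = reduce q N (\<lambda>i. c * v i)"

lemma vadd_apply: "i < N \<Longrightarrow> vadd q N u v i = (u i + v i) mod q"
  unfolding vadd_def by (rule reduce_apply)

lemma vscale_apply: "i < N \<Longrightarrow> vscale q N c v i = (c * v i) mod q"
  unfolding vscale_def by (rule reduce_apply)

lemma vadd_in_vecs_mod: "q > 0 \<Longrightarrow> vadd q N u v \<in> vecs_mod q N"
  unfolding vadd_def by (rule reduce_in_vecs_mod)

lemma vscale_in_vecs_mod: "q > 0 \<Longrightarrow> vscale q N c v \<in> vecs_mod q N"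
  unfolding vscale_def by (rule reduce_in_vecs_mod)

lemma vadd_zero_right: "u \<in> vecs_mod q N \<Longrightarrow> vadd q N u zero_vec = u"
  and vadd_zero_left: "u \<in> vecs_mod q N \<Longrightarrow> vadd q N zero_vec u = u"
  unfolding vadd_def by (simp_all add: reduce_vecs_mod)

lemma vscale_zero_vec: "vscale q N c zero_vec = zero_vec"
  unfolding vscale_def reduce_eq_zero_iff by simp

lemma vadd_neg: "vadd q N u (vscale q N (-1) u) = zero_vec"
  unfolding vadd_def reduce_eq_zero_iff by (simp add: vscale_apply mod_simps)

lemma vadd_neg_cancel_left:
  "q > 0 \<Longrightarrow> v \<in> vecs_mod q N \<Longrightarrow> vadd q N w (vadd q N v (vscale q N (-1) w)) = v"
  by (rule vecs_mod_eqI[OF vadd_in_vecs_mod]) (auto simp: vadd_apply vscale_apply mod_simps)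

lemma vadd_neg_cancel_right:
  "q > 0 \<Longrightarrow> v \<in> vecs_mod q N \<Longrightarrow> vadd q N (vadd q N w v) (vscale q N (-1) w) = v"
  by (rule vecs_mod_eqI[OF vadd_in_vecs_mod]) (auto simp: vadd_apply vscale_apply mod_simps)

lemma vadd_left_cancel:
  assumes "u \<in> vecs_mod q N" "v \<in> vecs_mod q N" "vadd q N w u = vadd q N w v"
  shows "u = v"
proof (rule vecs_mod_eqI[OF assms(1,2)])
  fix i assume "i < N"
  then have "(w i + u i) mod q = (w i + v i) mod q" using assms(3) by (metis vadd_apply)
  then have "(w i + u i - w i) mod q = (w i + v i - w i) mod q" by (rule mod_diff_cong) simp
  then show "u i mod q = v i mod q" by simp
qed

definition submod :: "int \<Rightarrow> nat \<Rightarrow> (nat \<Rightarrow> int) set \<Rightarrow> bool" where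
  "submod q N G \<longleftrightarrow> G \<subseteq> vecs_mod q N \<and> zero_vec \<in> G
     \<and> (\<forall>u\<in>G. \<forall>v\<in>G. vadd q N u v \<in> G) \<and> (\<forall>c. \<forall>v\<in>G. vscale q N c v \<in> G)"

definition linear_on :: "int \<Rightarrow> nat \<Rightarrow> nat \<Rightarrow> (nat \<Rightarrow> int) set \<Rightarrow> ((nat \<Rightarrow> int) \<Rightarrow> nat \<Rightarrow> int) \<Rightarrow> bool" where
  "linear_on q N M G f \<longleftrightarrow> (\<forall>v\<in>G. f v \<in> vecs_mod q M)
     \<and> (\<forall>u\<in>G. \<forall>v\<in>G. f (vadd q N u v) = vadd q M (f u) (f v))
     \<and> (\<forall>c. \<forall>v\<in>G. f (vscale q N c v) = vscale q M c (f v))"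

lemma submod_subset: "submod q N G \<Longrightarrow> v \<in> G \<Longrightarrow> v \<in> vecs_mod q N"
  and submod_zero: "submod q N G \<Longrightarrow> zero_vec \<in> G"
  and submod_vadd: "submod q N G \<Longrightarrow> u \<in> G \<Longrightarrow> v \<in> G \<Longrightarrow> vadd q N u v \<in> G"
  and submod_vscale: "submod q N G \<Longrightarrow> v \<in> G \<Longrightarrow> vscale q N c v \<in> G"
  unfolding submod_def by auto

lemma finite_submod: "submod q N G \<Longrightarrow> finite G"
  using finite_subset[OF _ finite_vecs_mod] submod_subset by blast

lemma submod_vecs_mod: "q > 0 \<Longrightarrow> submod q N (vecs_mod q N)"
  unfolding submod_def using vadd_in_vecs_mod vscale_in_vecs_mod zero_vec_in_vecs_mod by blast

lemma linear_on_in: "linear_on q N M G f \<Longrightarrow> v \<in> G \<Longrightarrow> f v \<in> vecs_mod q M"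
  and linear_on_vadd: "linear_on q N M G f \<Longrightarrow> u \<in> G \<Longrightarrow> v \<in> G \<Longrightarrow>
      f (vadd q N u v) = vadd q M (f u) (f v)"
  and linear_on_vscale: "linear_on q N M G f \<Longrightarrow> v \<in> G \<Longrightarrow> f (vscale q N c v) = vscale q M c (f v)"
  unfolding linear_on_def by auto

lemma linear_on_zero:
  assumes "submod q N G" "linear_on q N M G f"
  shows "f zero_vec = zero_vec"
  using linear_on_vscale[OF assms(2) submod_zero[OF assms(1)], of 0] by (simp add: vscale_def)

lemma submod_kernel:
  assumes q: "q > 0" and G: "submod q N G" and f: "linear_on q N M G f"
  shows "submod q N {v\<in>G. f v = zero_vec}"
  unfolding submod_def
  using G f linear_on_zero[OF G f] vadd_zero_right[OF zero_vec_in_vecs_mod[OF q]]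
  by (auto simp: submod_subset submod_zero submod_vadd submod_vscale linear_on_vadd
      linear_on_vscale vscale_zero_vec)

lemma vadd_image_submod:
  assumes q: "q > 0" and G: "submod q N G" and g: "g \<in> G"
  shows "vadd q N g ` G = G"
proof
  show "vadd q N g ` G \<subseteq> G" using G g by (auto intro: submod_vadd)
  show "G \<subseteq> vadd q N g ` G"
  proof
    fix v assume v: "v \<in> G"
    have "vadd q N v (vscale q N (-1) g) \<in> G" using G g v by (simp add: submod_vadd submod_vscale)
    moreover have "vadd q N g (vadd q N v (vscale q N (-1) g)) = v"
      using vadd_neg_cancel_left[OF q submod_subset[OF G v]] .
    ultimately show "v \<in> vadd q N g ` G" by (metis image_eqI)
  qed
qed

lemma inj_on_vadd: "G \<subseteq> vecs_mod q N \<Longrightarrow> inj_on (vadd q N g) G"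
  by (meson inj_onI subsetD vadd_left_cancel)

text \<open>Each fibre of a linear map is a translate of its kernel.\<close>

lemma card_kernel_mult_card_image:
  assumes q: "q > 0" and G: "submod q N G" and f: "linear_on q N M G f"
  shows "card G = card {v\<in>G. f v = zero_vec} * card (f ` G)"
proof -
  let ?K = "{v\<in>G. f v = zero_vec}"
  have fibre: "{v\<in>G. f v = f g} = vadd q N g ` ?K" if g: "g \<in> G" for g
  proof -
    have "v \<in> vadd q N g ` ?K" if v: "v \<in> G" "f v = f g" for v
    proof
      let ?k = "vadd q N v (vscale q N (-1) g)"
      show "v = vadd q N g ?k" using vadd_neg_cancel_left[OF q submod_subset[OF G v(1)]] by simp
      have "f ?k = vadd q M (f g) (vscale q M (-1) (f g))"
        using v g G f by (simp add: linear_on_vadd linear_on_vscale submod_vscale)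
      then show "?k \<in> ?K" using v g G by (simp add: vadd_neg submod_vadd submod_vscale)
    qed
    moreover have "f (vadd q N g k) = f g" if "k \<in> ?K" for k
      using that g G f by (simp add: linear_on_vadd vadd_zero_right linear_on_in)
    ultimately show ?thesis using g G by (auto intro: submod_vadd)
  qed
  have "card G = card (f ` G) * card ?K"
  proof (rule card_eq_card_image_mult_fibre[OF finite_submod[OF G]])
    fix t assume "t \<in> f ` G"
    then obtain g where g: "g \<in> G" "t = f g" by blast
    have "inj_on (vadd q N g) ?K" using G by (intro inj_on_vadd) (auto simp: submod_subset)
    then show "card {v\<in>G. f v = t} = card ?K" using g fibre by (simp add: card_image)
  qed
  then show ?thesis by simp
qed

section \<open>Torsion and elements of full order\<close>

definition torsion :: "int \<Rightarrow> nat \<Rightarrow> int \<Rightarrow> (nat \<Rightarrow> int) set \<Rightarrow> (nat \<Rightarrow> int) set" where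
  "torsion q N c G = {v\<in>G. vscale q N c v = zero_vec}"

definition full_order :: "int \<Rightarrow> nat \<Rightarrow> (nat \<Rightarrow> int) set \<Rightarrow> (nat \<Rightarrow> int) set" where
  "full_order q N G = {v\<in>G. \<forall>x. vscale q N x v = zero_vec \<longrightarrow> q dvd x}"

lemma vscale_eq_zero_iff: "vscale q N c v = zero_vec \<longleftrightarrow> (\<forall>i<N. q dvd c * v i)"
  unfolding vscale_def reduce_eq_zero_iff by (simp add: dvd_eq_mod_eq_0)

lemma vscale_eq_zero_dvd: "vscale q N a v = zero_vec \<Longrightarrow> a dvd b \<Longrightarrow> vscale q N b v = zero_vec"
  unfolding vscale_eq_zero_iff by (meson dvd_trans mult_dvd_mono dvd_refl)

lemma vscale_eq_zero_gcd:
  assumes "vscale q N a v = zero_vec" "vscale q N b v = zero_vec"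
  shows "vscale q N (gcd a b) v = zero_vec"
proof -
  obtain u w where "gcd a b = u * a + w * b" using bezout_int by metis
  then show ?thesis using assms unfolding vscale_eq_zero_iff
    by (simp add: distrib_right mult.assoc dvd_add)
qed

lemma vscale_modulus: "vscale q N q v = zero_vec"
  unfolding vscale_eq_zero_iff by simp

lemma submod_torsion:
  assumes q: "q > 0" and G: "submod q N G"
  shows "submod q N (torsion q N c G)"
proof -
  have "linear_on q N N G (vscale q N c)"
    unfolding linear_on_def
  proof (intro conjI ballI allI)
    fix u v
    show "vscale q N c (vadd q N u v) = vadd q N (vscale q N c u) (vscale q N c v)"
      by (rule vecs_mod_eqI[OF vscale_in_vecs_mod[OF q] vadd_in_vecs_mod[OF q]])
        (simp add: vscale_apply vadd_apply mod_simps distrib_left)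
    fix x
    show "vscale q N c (vscale q N x v) = vscale q N x (vscale q N c v)"
      by (rule vecs_mod_eqI[OF vscale_in_vecs_mod[OF q] vscale_in_vecs_mod[OF q]])
        (simp add: vscale_apply mod_simps mult.left_commute)
  qed (rule vscale_in_vecs_mod[OF q])
  then show ?thesis unfolding torsion_def by (rule submod_kernel[OF q G])
qed

lemma card_torsion_vecs_mod:
  fixes Q c M :: nat
  assumes Q: "Q > 0" and c: "c dvd Q"
  shows "card (torsion (int Q) M (int c) (vecs_mod (int Q) M)) = c ^ M"
proof -
  obtain d where d: "Q = c * d" using c by (auto elim: dvdE)
  have pos: "c > 0" "d > 0" using d Q by auto
  let ?T = "{t. 0 \<le> t \<and> t < int Q \<and> int Q dvd int c * t}"
  have T: "?T = (\<lambda>u. int d * u) ` {0..<int c}"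
  proof (rule set_eqI, rule iffI)
    fix t assume t: "t \<in> ?T"
    then have "int c * int d dvd int c * t" using d by simp
    then have "int d dvd t" using pos by simp
    then obtain u where u: "t = int d * u" by (auto elim: dvdE)
    moreover have "0 \<le> u" "u < int c" using t u pos d by (auto simp: zero_le_mult_iff mult.commute)
    ultimately show "t \<in> (\<lambda>u. int d * u) ` {0..<int c}" by (intro image_eqI[of _ _ u]) auto
  next
    fix t assume "t \<in> (\<lambda>u. int d * u) ` {0..<int c}"
    then obtain u where "u \<in> {0..<int c}" "t = int d * u" by blast
    then have u: "t = int d * u" "0 \<le> u" "u < int c" by auto
    then have "int d * u < int d * int c" using pos by simp
    then show "t \<in> ?T" using u pos d by (auto simp: mult.commute)
  qed
  have "card ?T = c" unfolding T using pos by (subst card_image) (auto simp: inj_on_def)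
  moreover have "torsion (int Q) M (int c) (vecs_mod (int Q) M) = tuples M ?T 0"
    unfolding torsion_def tuples_def vecs_mod_iff vscale_eq_zero_iff by auto
  moreover have "finite ?T" by (rule finite_subset[of _ "{0..<int Q}"]) auto
  ultimately show ?thesis using finite_card_tuples[of ?T M 0] by simp
qed

lemma torsion_vecs_mod_eq_image:
  fixes Q c :: nat
  assumes Q: "Q > 0" and c: "c dvd Q"
  shows "torsion (int Q) M (int c) (vecs_mod (int Q) M)
      = vscale (int Q) M (int (Q div c)) ` vecs_mod (int Q) M"
proof (rule set_eqI, rule iffI)
  have q: "int Q > 0" using Q by simp
  obtain d where d: "Q = c * d" using c by (auto elim: dvdE)
  then have d_eq: "Q div c = d" and pos: "c > 0" "d > 0" using Q by auto
  fix t assume "t \<in> torsion (int Q) M (int c) (vecs_mod (int Q) M)"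
  then have t: "t \<in> vecs_mod (int Q) M" and "\<forall>l<M. int Q dvd int c * t l"
    unfolding torsion_def vscale_eq_zero_iff by auto
  then have dvd: "int d dvd t l" if "l < M" for l
    using that d pos by simp
  have "t = vscale (int Q) M (int d) (reduce (int Q) M (\<lambda>l. t l div int d))"
  proof (rule vecs_mod_eqI[OF t vscale_in_vecs_mod[OF q]])
    fix l assume "l < M"
    then have "int d * (t l div int d) = t l" using dvd by simp
    with \<open>l < M\<close> show "t l mod int Q
        = vscale (int Q) M (int d) (reduce (int Q) M (\<lambda>l. t l div int d)) l mod int Q"
      by (simp add: vscale_apply reduce_apply mod_simps)
  qed
  then show "t \<in> vscale (int Q) M (int (Q div c)) ` vecs_mod (int Q) M"
    unfolding d_eq using reduce_in_vecs_mod[OF q] by blast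
next
  have q: "int Q > 0" using Q by simp
  fix t assume "t \<in> vscale (int Q) M (int (Q div c)) ` vecs_mod (int Q) M"
  then obtain y where t: "t = vscale (int Q) M (int (Q div c)) y" by blast
  have "int c * int (Q div c) = int Q" using c by (simp flip: of_nat_mult)
  then have "int c * ((int (Q div c) * y l) mod int Q) mod int Q = 0" for l
    by (simp add: mod_mult_right_eq mult.assoc[symmetric])
  then have "int Q dvd int c * ((int (Q div c) * y l) mod int Q)" for l
    by (simp add: dvd_eq_mod_eq_0)
  then show "t \<in> torsion (int Q) M (int c) (vecs_mod (int Q) M)"
    unfolding torsion_def t vscale_eq_zero_iff using vscale_in_vecs_mod[OF q]
      by (simp add: vscale_apply)
qed

definition unimodular_count :: "nat \<Rightarrow> nat \<Rightarrow> real" where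
  "unimodular_count Q r = real Q ^ r * (\<Prod>p\<in>prime_factors Q. 1 - 1 / real p ^ r)"

definition torsion_avoiding :: "int \<Rightarrow> nat \<Rightarrow> (nat \<Rightarrow> int) set \<Rightarrow> nat \<Rightarrow> nat set \<Rightarrow> (nat \<Rightarrow> int) set" where
  "torsion_avoiding q N G c S =
     {v \<in> torsion q N (int c) G. \<forall>p\<in>S. vscale q N (int (c div p)) v \<noteq> zero_vec}"

lemma finite_torsion_avoiding: "submod q N G \<Longrightarrow> finite (torsion_avoiding q N G c S)"
  unfolding torsion_avoiding_def torsion_def by (simp add: finite_submod)

lemma div_prime_div_prime:
  fixes c p p' :: nat
  assumes "prime p" "prime p'" "p \<noteq> p'" "p dvd c" "p' dvd c"
  obtains m where "c div p = p' * m" "c div p' = p * m" "c div p div p' = m"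
proof -
  have "p * p' dvd c"
    using assms by (simp add: divides_mult primes_coprime)
  then obtain m where c: "c = p * p' * m" by blast
  have pos: "p > 0" "p' > 0" using assms by (auto simp: prime_gt_0_nat)
  have "c = p * (p' * m)" "c = p' * (p * m)" unfolding c by (simp_all add: ac_simps)
  then have div: "c div p = p' * m" "c div p' = p * m"
    using pos by (metis nonzero_mult_div_cancel_left not_gr0)+
  then have "c div p div p' = m" using pos by simp
  with div show ?thesis by (rule that)
qed

text \<open>The point is that \<open>c div p div p'\<close> is the gcd of \<open>c div p\<close> and \<open>c div p'\<close>.\<close>

lemma vscale_div_prime_eq_zero_iff:
  fixes c p p' :: nat
  assumes p: "prime p" "prime p'" "p \<noteq> p'" "p dvd c" "p' dvd c"
    and v: "vscale q N (int (c div p)) v = zero_vec"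
  shows "vscale q N (int (c div p')) v = zero_vec \<longleftrightarrow> vscale q N (int (c div p div p')) v = zero_vec"
proof -
  obtain m where m: "c div p = p' * m" "c div p' = p * m" "c div p div p' = m"
    using div_prime_div_prime[OF p] by blast
  have "coprime (int p) (int p')" using p by (simp add: primes_coprime)
  then have "gcd (int (c div p')) (int (c div p)) = int m"
    unfolding m
      by (simp add: gcd_mult_distrib_int[symmetric] mult.commute[of _ "int m"] coprime_iff_gcd_eq_1)
  then have "vscale q N (int (c div p')) v = zero_vec \<Longrightarrow> vscale q N (int m) v = zero_vec"
    using vscale_eq_zero_gcd[OF _ v] by metis
  moreover have "int m dvd int (c div p')" unfolding m by simp
  ultimately show ?thesis using vscale_eq_zero_dvd m(3) by metis
qed

lemma torsion_avoiding_killed: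
  fixes c p :: nat
  assumes p: "prime p" "p dvd c" "p \<notin> S" and S: "\<forall>p'\<in>S. prime p' \<and> p' dvd c"
  shows "{v \<in> torsion_avoiding q N G c S. vscale q N (int (c div p)) v = zero_vec}
    = torsion_avoiding q N G (c div p) S"
proof -
  have "c div p dvd c" using p(2) by (metis dvd_mult_div_cancel dvd_triv_right)
  then have "int (c div p) dvd int c" by simp
  then have kill_c:
      "vscale q N (int (c div p)) v = zero_vec \<Longrightarrow> vscale q N (int c) v = zero_vec" for v
    using vscale_eq_zero_dvd by blast
  have iff: "vscale q N (int (c div p)) v = zero_vec \<Longrightarrow> p' \<in> S \<Longrightarrow>
      vscale q N (int (c div p')) v = zero_vec \<longleftrightarrow>
      vscale q N (int (c div p div p')) v = zero_vec" for v p'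
    using vscale_div_prime_eq_zero_iff[OF p(1) _ _ p(2)] S p(3) by metis
  show ?thesis
    unfolding torsion_avoiding_def torsion_def using kill_c iff by auto
qed

lemma card_torsion_avoiding:
  fixes Q c r :: nat
  assumes G: "submod (int Q) N G"
    and T: "\<And>c. c dvd Q \<Longrightarrow> card (torsion (int Q) N (int c) G) = c ^ r"
    and S: "finite S" "\<forall>p\<in>S. prime p \<and> p dvd c" and c: "c dvd Q"
  shows "real (card (torsion_avoiding (int Q) N G c S)) = real c ^ r * (\<Prod>p\<in>S. 1 - 1 / real p ^ r)"
  using S c
proof (induction S arbitrary: c rule: finite_induct)
  case empty
  then show ?case using T by (simp add: torsion_avoiding_def)
next
  case (insert p S)
  let ?A = "torsion_avoiding (int Q) N G"
  have p: "prime p" "p dvd c" and S: "\<forall>p'\<in>S. prime p' \<and> p' dvd c"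
    using insert.prems by auto
  have S': "\<forall>p'\<in>S. prime p' \<and> p' dvd c div p"
  proof
    fix p' assume "p' \<in> S"
    with S insert.hyps(2) have p': "prime p'" "p \<noteq> p'" "p' dvd c" by auto
    then obtain m where "c div p = p' * m" using div_prime_div_prime[OF p(1) _ _ p(2)] by blast
    with p' show "prime p' \<and> p' dvd c div p" by simp
  qed
  have "c div p dvd c" using p(2) by (metis dvd_mult_div_cancel dvd_triv_right)
  then have cp: "c div p dvd Q" using insert.prems(2) by (rule dvd_trans)
  have killed: "{v \<in> ?A c S. vscale (int Q) N (int (c div p)) v = zero_vec} = ?A (c div p) S"
    by (rule torsion_avoiding_killed[OF p insert.hyps(2) S])
  have "?A c (insert p S) = ?A c S - {v \<in> ?A c S. vscale (int Q) N (int (c div p)) v = zero_vec}"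
    unfolding torsion_avoiding_def by auto
  then have split: "?A c (insert p S) = ?A c S - ?A (c div p) S" and sub: "?A (c div p) S \<subseteq> ?A c S"
    unfolding killed by (auto simp flip: killed)
  have "real (card (?A c (insert p S))) = real (card (?A c S)) - real (card (?A (c div p) S))"
    unfolding split using sub finite_torsion_avoiding[OF G]
    by (simp add: card_Diff_subset card_mono of_nat_diff)
  also have "\<dots> = real c ^ r * (\<Prod>p\<in>S. 1 - 1 / real p ^ r)
      - (real c / real p) ^ r * (\<Prod>p\<in>S. 1 - 1 / real p ^ r)"
    using insert.IH[OF S insert.prems(2)] insert.IH[OF S' cp] p by (simp add: real_of_nat_div)
  also have "\<dots> = real c ^ r * (\<Prod>p\<in>insert p S. 1 - 1 / real p ^ r)"
    using insert.hyps by (simp add: power_divide algebra_simps)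
  finally show ?case .
qed

lemma full_order_eq_torsion_avoiding:
  fixes Q :: nat
  assumes Q: "Q > 0"
  shows "full_order (int Q) N G = torsion_avoiding (int Q) N G Q (prime_factors Q)"
proof (rule set_eqI, rule iffI)
  fix v assume v: "v \<in> full_order (int Q) N G"
  have "vscale (int Q) N (int (Q div p)) v \<noteq> zero_vec" if p: "p \<in> prime_factors Q" for p
  proof
    assume "vscale (int Q) N (int (Q div p)) v = zero_vec"
    then have "Q dvd Q div p" using v unfolding full_order_def by auto
    moreover have "Q div p < Q" using p Q
      by (intro div_less_dividend) (auto simp: in_prime_factors_iff prime_gt_Suc_0_nat)
    moreover have "Q div p > 0" using p Q
      by (simp add: in_prime_factors_iff div_greater_zero_iff dvd_imp_le prime_gt_0_nat)
    ultimately show False by (simp add: nat_dvd_not_less)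
  qed
  then show "v \<in> torsion_avoiding (int Q) N G Q (prime_factors Q)"
    using v vscale_modulus unfolding full_order_def torsion_avoiding_def torsion_def by auto
next
  fix v assume v: "v \<in> torsion_avoiding (int Q) N G Q (prime_factors Q)"
  have "int Q dvd x" if x: "vscale (int Q) N x v = zero_vec" for x
  proof (rule ccontr)
    assume x_Q: "\<not> int Q dvd x"
    obtain g :: nat where g: "int g = gcd x (int Q)" using gcd_ge_0_int by (metis nonneg_eq_int)
    have "int g dvd int Q" unfolding g by simp
    then have "Q = g * (Q div g)" by simp
    moreover have "g \<noteq> Q" using x_Q g by (metis gcd_dvd1)
    ultimately have "Q div g \<noteq> 1" by auto
    then obtain p where p: "prime p" "p dvd Q div g" using prime_factor_nat by blast
    then obtain t where t: "Q div g = p * t" by (auto elim: dvdE)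
    have Q_eq: "Q = p * (g * t)" using t \<open>Q = g * (Q div g)\<close> by simp
    then have "p \<in> prime_factors Q" using p Q by (auto simp: in_prime_factors_iff)
    moreover have "Q div p = g * t" using Q_eq p by (simp add: prime_gt_0_nat)
    then have "int g dvd int (Q div p)" by simp
    moreover have "vscale (int Q) N (int g) v = zero_vec"
      unfolding g by (rule vscale_eq_zero_gcd[OF x vscale_modulus])
    ultimately show False using v vscale_eq_zero_dvd unfolding torsion_avoiding_def by blast
  qed
  then show "v \<in> full_order (int Q) N G" using v
    unfolding full_order_def torsion_avoiding_def torsion_def by auto
qed

lemma card_full_order:
  fixes Q r :: nat
  assumes G: "submod (int Q) N G" and Q: "Q > 0"
    and T: "\<And>c. c dvd Q \<Longrightarrow> card (torsion (int Q) N (int c) G) = c ^ r"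
  shows "real (card (full_order (int Q) N G)) = unimodular_count Q r"
  unfolding full_order_eq_torsion_avoiding[OF Q] unimodular_count_def
  by (rule card_torsion_avoiding[OF G T]) (auto simp: in_prime_factors_iff)

section \<open>Characters and duality\<close>

definition dot :: "nat \<Rightarrow> (nat \<Rightarrow> int) \<Rightarrow> (nat \<Rightarrow> int) \<Rightarrow> int" where
  "dot N u v = (\<Sum>i<N. u i * v i)"

definition unit_vec :: "nat \<Rightarrow> nat \<Rightarrow> int" where
  "unit_vec i = (\<lambda>t. if t = i then 1 else 0)"

lemma dot_commute: "dot N u v = dot N v u"
  unfolding dot_def by (simp add: mult.commute)

lemma dot_zero_vec [simp]: "dot N u zero_vec = 0"
  unfolding dot_def by simp

lemma dot_vadd_mod: "dot N (vadd q N u v) w mod q = (dot N u w + dot N v w) mod q"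
proof -
  have "dot N (vadd q N u v) w mod q = (\<Sum>i<N. u i * w i + v i * w i) mod q"
    unfolding dot_def by (rule sum_mod_cong) (simp add: vadd_apply mod_simps distrib_right)
  then show ?thesis by (simp add: dot_def sum.distrib)
qed

lemma unit_vec_in_vecs_mod: "q > 1 \<Longrightarrow> i < N \<Longrightarrow> unit_vec i \<in> vecs_mod q N"
  unfolding unit_vec_def vecs_mod_iff by auto

lemma unit_vec_commute: "unit_vec l i = unit_vec i l"
  unfolding unit_vec_def by auto

lemma sum_unit_vec: "i < N \<Longrightarrow> (\<Sum>t<N. f t * unit_vec i t) = f i"
  unfolding unit_vec_def by (simp add: if_distrib cong: if_cong)

lemma dot_unit_vec: "i < N \<Longrightarrow> dot N (unit_vec i) v = v i"
  unfolding dot_def using sum_unit_vec[of i N v] by (simp add: mult.commute)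

definition additive_char :: "int \<Rightarrow> int \<Rightarrow> complex" where
  "additive_char q t = cis (2 * pi * of_int t / of_int q)"

lemma additive_char_add: "additive_char q (s + t) = additive_char q s * additive_char q t"
  unfolding additive_char_def by (simp add: cis_mult add_divide_distrib distrib_left)

lemma additive_char_eq_1_iff:
  assumes "q > 0"
  shows "additive_char q t = 1 \<longleftrightarrow> q dvd t"
proof
  assume "additive_char q t = 1"
  then obtain n where "2 * pi * of_int t / of_int q = of_int n * (2 * pi)"
    unfolding additive_char_def cis_eq_1_iff by blast
  then have "real_of_int t = real_of_int (n * q)" using assms by (simp add: field_simps)
  then show "q dvd t" by (simp only: of_int_eq_iff) simp
next
  assume "q dvd t"
  then obtain n where "t = q * n" by (auto elim: dvdE)
  then show "additive_char q t = 1" using assms unfolding additive_char_def cis_eq_1_iff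
    by (intro exI[of _ n]) simp
qed

lemma additive_char_mod_cong:
  assumes "q > 0" and "s mod q = t mod q"
  shows "additive_char q s = additive_char q t"
proof -
  have "additive_char q (s - t) = 1" using assms
    by (simp add: additive_char_eq_1_iff mod_eq_dvd_iff)
  then show ?thesis using additive_char_add[of q "s - t" t] by simp
qed

text \<open>Orthogonality of characters: translating by an element \<open>g\<^sub>0\<close> with
  \<open>additive_char q (dot N g\<^sub>0 w) \<noteq> 1\<close> multiplies the sum by that value.\<close>

lemma sum_additive_char_submod:
  assumes q: "q > 0" and G: "submod q N G"
  shows "(\<Sum>g\<in>G. additive_char q (dot N g w))
      = (if \<forall>g\<in>G. q dvd dot N g w then of_nat (card G) else 0)"
proof (cases "\<forall>g\<in>G. q dvd dot N g w")
  case True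
  then have "(\<Sum>g\<in>G. additive_char q (dot N g w)) = (\<Sum>g\<in>G. 1)"
    using additive_char_eq_1_iff[OF q] by (intro sum.cong) auto
  with True show ?thesis by simp
next
  case False
  then obtain g0 where g0: "g0 \<in> G" "\<not> q dvd dot N g0 w" by auto
  let ?S = "\<Sum>g\<in>G. additive_char q (dot N g w)"
  have inj: "inj_on (vadd q N g0) G" using G by (intro inj_on_vadd) (auto simp: submod_subset)
  have "?S = (\<Sum>g\<in>G. additive_char q (dot N (vadd q N g0 g) w))"
    using sum.reindex[OF inj, of "\<lambda>g. additive_char q (dot N g w)"] vadd_image_submod[OF q G g0(1)]
      by simp
  also have "\<dots> = (\<Sum>g\<in>G. additive_char q (dot N g0 w) * additive_char q (dot N g w))"
    using additive_char_mod_cong[OF q dot_vadd_mod] by (simp add: additive_char_add)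
  also have "\<dots> = additive_char q (dot N g0 w) * ?S" by (simp add: sum_distrib_left)
  finally have "(1 - additive_char q (dot N g0 w)) * ?S = 0" by (simp add: algebra_simps)
  moreover have "additive_char q (dot N g0 w) \<noteq> 1" using g0(2) additive_char_eq_1_iff[OF q] by simp
  ultimately have "?S = 0" by simp
  then show ?thesis by (simp only: if_not_P[OF False])
qed

text \<open>Double counting \<open>\<Sum>\<^sub>z \<Sum>\<^sub>g additive_char q (dot M g z)\<close> over \<open>z \<in> \<int>\<^sub>q\<^sup>M\<close>,
  \<open>g \<in> I\<close> gives \<open>|I| = q\<^sup>M\<close>.\<close>

lemma submod_eq_vecs_mod_if_annihilator_trivial:
  assumes q: "q > 1" and I: "submod q M I"
    and ann: "\<And>z. z \<in> vecs_mod q M \<Longrightarrow> \<forall>g\<in>I. q dvd dot M g z \<Longrightarrow> z = zero_vec"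
  shows "I = vecs_mod q M"
proof -
  have q0: "q > 0" using q by simp
  let ?V = "vecs_mod q M"
  let ?X = "\<Sum>z\<in>?V. \<Sum>g\<in>I. additive_char q (dot M g z)"
  have orth_I: "(\<forall>g\<in>I. q dvd dot M g z) \<longleftrightarrow> z = zero_vec" if "z \<in> ?V" for z
    using ann[OF that] by auto
  have orth_V: "(\<forall>z\<in>?V. q dvd dot M z g) \<longleftrightarrow> g = zero_vec" if g: "g \<in> I" for g
  proof
    assume g_orth: "\<forall>z\<in>?V. q dvd dot M z g"
    have "g l mod q = 0" if l: "l < M" for l
      using g_orth unit_vec_in_vecs_mod[OF q l] dot_unit_vec[OF l, of g] by auto
    then have "\<forall>l<M. g l mod q = 0" by blast
    then show "g = zero_vec" using submod_subset[OF I g] vecs_mod_eq_zero_iff by blast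
  qed simp
  have "?X = (\<Sum>z\<in>?V. if z = zero_vec then of_nat (card I) else 0)"
    using orth_I by (intro sum.cong refl) (simp add: sum_additive_char_submod[OF q0 I])
  also have "\<dots> = of_nat (card I)"
    using zero_vec_in_vecs_mod[OF q0] finite_vecs_mod by simp
  finally have X_I: "?X = of_nat (card I)" .
  have "?X = (\<Sum>g\<in>I. \<Sum>z\<in>?V. additive_char q (dot M z g))"
    by (subst sum.swap) (simp add: dot_commute)
  also have "\<dots> = (\<Sum>g\<in>I. if g = zero_vec then of_nat (card ?V) else 0)"
    using orth_V
      by (intro sum.cong refl) (simp add: sum_additive_char_submod[OF q0 submod_vecs_mod[OF q0]])
  also have "\<dots> = of_nat (card ?V)"
    using submod_zero[OF I] finite_submod[OF I] by simp
  finally have "card I = card ?V" using X_I by simp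
  then show ?thesis
    using card_subset_eq[OF finite_vecs_mod] submod_subset[OF I] by blast
qed

definition lcomb :: "int \<Rightarrow> nat \<Rightarrow> nat \<Rightarrow> (nat \<Rightarrow> int) \<Rightarrow> (nat \<Rightarrow> nat \<Rightarrow> int) \<Rightarrow> nat \<Rightarrow> int" where
  "lcomb q N m x a = reduce q N (\<lambda>i. \<Sum>j<m. x j * a j i)"

definition indep_mod :: "int \<Rightarrow> nat \<Rightarrow> nat \<Rightarrow> (nat \<Rightarrow> nat \<Rightarrow> int) \<Rightarrow> bool" where
  "indep_mod q N m a \<longleftrightarrow> (\<forall>x. lcomb q N m x a = zero_vec \<longrightarrow> (\<forall>j<m. x j mod q = 0))"

definition mat_apply :: "int \<Rightarrow> nat \<Rightarrow> nat \<Rightarrow> (nat \<Rightarrow> nat \<Rightarrow> int) \<Rightarrow> (nat \<Rightarrow> int) \<Rightarrow> nat \<Rightarrow> int" where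
  "mat_apply q N m A y = reduce q m (\<lambda>l. dot N (A l) y)"

lemma lcomb_apply: "i < N \<Longrightarrow> lcomb q N m x a i = (\<Sum>j<m. x j * a j i) mod q"
  unfolding lcomb_def by (rule reduce_apply)

lemma lcomb_in_vecs_mod: "q > 0 \<Longrightarrow> lcomb q N m x a \<in> vecs_mod q N"
  unfolding lcomb_def by (rule reduce_in_vecs_mod)

lemma lcomb_cong: "(\<And>j. j < m \<Longrightarrow> a j = b j) \<Longrightarrow> lcomb q N m x a = lcomb q N m x b"
  unfolding lcomb_def by (intro arg_cong[where f="reduce q N"] ext sum.cong) auto

lemma lcomb_eq_iff:
  "lcomb q N m x a = lcomb q N m' y b \<longleftrightarrow>
     (\<forall>i<N. (\<Sum>j<m. x j * a j i) mod q = (\<Sum>j<m'. y j * b j i) mod q)"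
  unfolding lcomb_def by (rule reduce_eq_iff)

lemma lcomb_eq_zero_iff: "lcomb q N m x a = zero_vec \<longleftrightarrow> (\<forall>i<N. (\<Sum>j<m. x j * a j i) mod q = 0)"
  unfolding lcomb_def by (rule reduce_eq_zero_iff)

lemma lcomb_reduce_coeffs: "lcomb q N m (reduce q m x) a = lcomb q N m x a"
  unfolding lcomb_eq_iff by (auto intro: sum_mod_cong simp: reduce_apply mod_simps)

lemma lcomb_zero_coeffs:
  assumes "\<And>j. j < m \<Longrightarrow> x j mod q = 0"
  shows "lcomb q N m x a = zero_vec"
proof -
  have "reduce q m x = zero_vec" using assms by (simp add: reduce_eq_zero_iff)
  then have "lcomb q N m x a = lcomb q N m zero_vec a" by (metis lcomb_reduce_coeffs)
  then show ?thesis by (simp add: lcomb_eq_zero_iff)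
qed

lemma lcomb_Suc:
  "q > 0 \<Longrightarrow> lcomb q N (Suc m) x a = vadd q N (lcomb q N m x a) (vscale q N (x m) (a m))"
  by (rule vecs_mod_eqI[OF lcomb_in_vecs_mod vadd_in_vecs_mod])
    (simp_all add: lcomb_apply vadd_apply vscale_apply mod_simps)

lemma lcomb_in_submod:
  assumes q: "q > 0" and G: "submod q N G" and a: "\<And>j. j < m \<Longrightarrow> a j \<in> G"
  shows "lcomb q N m x a \<in> G"
  using a
proof (induction m)
  case 0
  then show ?case using submod_zero[OF G] by (simp add: lcomb_def)
next
  case (Suc m)
  then show ?case using G by (simp add: lcomb_Suc[OF q] submod_vadd submod_vscale)
qed

lemma linear_on_lcomb:
  assumes q: "q > 0" and G: "submod q N G" and f: "linear_on q N M G f"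
    and a: "\<And>j. j < m \<Longrightarrow> a j \<in> G"
  shows "f (lcomb q N m x a) = lcomb q M m x (\<lambda>j. f (a j))"
  using a
proof (induction m)
  case 0
  then show ?case using linear_on_zero[OF G f] by (simp add: lcomb_def)
next
  case (Suc m)
  then have "lcomb q N m x a \<in> G" "a m \<in> G" using lcomb_in_submod[OF q G] by auto
  with Suc G f show ?case
    by (simp add: lcomb_Suc[OF q] linear_on_vadd linear_on_vscale submod_vscale)
qed

lemma lcomb_unit_vec_coeffs:
  assumes "a j \<in> vecs_mod q N" "j < m"
  shows "lcomb q N m (unit_vec j) a = a j"
proof -
  have "(\<Sum>l<m. unit_vec j l * a l i) = a j i" for i
    using assms(2) unfolding unit_vec_def by (simp add: if_distrib[of "\<lambda>c. c * _"] cong: if_cong)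
  then have "lcomb q N m (unit_vec j) a = reduce q N (a j)" unfolding lcomb_def by simp
  then show ?thesis using reduce_vecs_mod[OF assms(1)] by simp
qed

lemma lcomb_unit_vecs: "lcomb q m m x unit_vec = reduce q m x"
  unfolding lcomb_def reduce_eq_iff using sum_unit_vec[of _ m x] by (simp add: unit_vec_commute)

lemma lcomb_lcomb:
  "lcomb q N m z (\<lambda>j. lcomb q N s (x j) a) = lcomb q N s (\<lambda>i. \<Sum>j<m. z j * x j i) a"
proof -
  have "(\<Sum>j<m. z j * lcomb q N s (x j) a t) mod q = (\<Sum>j<m. z j * (\<Sum>i<s. x j i * a i t)) mod q"
    if "t < N" for t
    using that by (intro sum_mod_cong) (simp add: lcomb_apply mod_simps)
  moreover have "(\<Sum>j<m. z j * (\<Sum>i<s. x j i * a i t)) = (\<Sum>i<s. (\<Sum>j<m. z j * x j i) * a i t)" for t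
    by (simp add: sum_distrib_left sum_distrib_right mult.assoc sum.swap[of _ "{..<m}"])
  ultimately show ?thesis unfolding lcomb_eq_iff by simp
qed

lemma indep_modD: "indep_mod q N m a \<Longrightarrow> lcomb q N m x a = zero_vec \<Longrightarrow> j < m \<Longrightarrow> x j mod q = 0"
  unfolding indep_mod_def by blast

lemma indep_mod_cong: "(\<And>j. j < m \<Longrightarrow> a j = b j) \<Longrightarrow> indep_mod q N m a \<longleftrightarrow> indep_mod q N m b"
  unfolding indep_mod_def using lcomb_cong by metis

lemma indep_mod_lcomb_inj:
  assumes ind: "indep_mod q N m a" and x: "x \<in> vecs_mod q m" and y: "y \<in> vecs_mod q m"
    and eq: "lcomb q N m x a = lcomb q N m y a"
  shows "x = y"
proof -
  have "lcomb q N m (\<lambda>j. x j - y j) a = zero_vec"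
    unfolding lcomb_eq_zero_iff
  proof (intro allI impI)
    fix i assume "i < N"
    then have "(\<Sum>j<m. x j * a j i) mod q = (\<Sum>j<m. y j * a j i) mod q"
      using eq by (simp add: lcomb_eq_iff)
    then show "(\<Sum>j<m. (x j - y j) * a j i) mod q = 0"
      by (simp add: left_diff_distrib sum_subtractf mod_eq_dvd_iff dvd_eq_mod_eq_0[symmetric])
  qed
  then have "\<forall>j<m. (x j - y j) mod q = 0" using ind unfolding indep_mod_def by blast
  then show ?thesis
    using x y by (simp add: vecs_mod_eq_iff mod_eq_dvd_iff dvd_eq_mod_eq_0)
qed

lemma mat_apply_apply: "l < m \<Longrightarrow> mat_apply q N m A y l = dot N (A l) y mod q"
  unfolding mat_apply_def by (rule reduce_apply)

lemma mat_apply_in_vecs_mod: "q > 0 \<Longrightarrow> mat_apply q N m A y \<in> vecs_mod q m"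
  unfolding mat_apply_def by (rule reduce_in_vecs_mod)

lemma mat_apply_eq_zero_iff: "mat_apply q N m A v = zero_vec \<longleftrightarrow> (\<forall>l<m. mat_apply q N m A v l = 0)"
  unfolding mat_apply_def reduce_def by (auto simp: fun_eq_iff)

lemma linear_on_mat_apply:
  assumes q: "q > 0"
  shows "linear_on q N m G (mat_apply q N m A)"
  unfolding linear_on_def
proof (intro conjI ballI allI)
  fix u v
  have "dot N (A l) (vadd q N u v) mod q = (dot N (A l) u + dot N (A l) v) mod q" for l
    using dot_vadd_mod[of N q u v "A l"] by (simp add: dot_commute)
  then show "mat_apply q N m A (vadd q N u v)
      = vadd q m (mat_apply q N m A u) (mat_apply q N m A v)"
    by (intro vecs_mod_eqI[OF mat_apply_in_vecs_mod[OF q] vadd_in_vecs_mod[OF q]])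
      (simp add: mat_apply_apply vadd_apply mod_simps)
  fix c
  have "dot N (A l) (vscale q N c v) mod q = c * dot N (A l) v mod q" for l
    unfolding dot_def
      by (subst sum_distrib_left, rule sum_mod_cong) (simp add: vscale_apply mod_simps ac_simps)
  then show "mat_apply q N m A (vscale q N c v) = vscale q m c (mat_apply q N m A v)"
    by (intro vecs_mod_eqI[OF mat_apply_in_vecs_mod[OF q] vscale_in_vecs_mod[OF q]])
      (simp add: mat_apply_apply vscale_apply mod_simps)
qed (rule mat_apply_in_vecs_mod[OF q])

lemma mat_apply_vscale:
  "q > 0 \<Longrightarrow> mat_apply q N m A (vscale q N c v) = vscale q m c (mat_apply q N m A v)"
  by (rule linear_on_vscale[OF linear_on_mat_apply UNIV_I])

lemma submod_image:
  assumes q: "q > 0" and G: "submod q N G" and f: "linear_on q N M G f"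
  shows "submod q M (f ` G)"
  unfolding submod_def
proof (intro conjI ballI allI)
  show "f ` G \<subseteq> vecs_mod q M" using linear_on_in[OF f] by auto
  show "zero_vec \<in> f ` G" using linear_on_zero[OF G f] submod_zero[OF G] by (metis image_eqI)
next
  fix u v assume "u \<in> f ` G" "v \<in> f ` G"
  then show "vadd q M u v \<in> f ` G" using G f by (auto simp: linear_on_vadd[symmetric] submod_vadd)
next
  fix c v assume "v \<in> f ` G"
  then show "vscale q M c v \<in> f ` G" using G f
    by (auto simp: linear_on_vscale[symmetric] submod_vscale)
qed

lemma mat_apply_surj:
  assumes q: "q > 1" and ind: "indep_mod q N m a"
  shows "mat_apply q N m a ` vecs_mod q N = vecs_mod q m"
proof (rule submod_eq_vecs_mod_if_annihilator_trivial[OF q])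
  have q0: "q > 0" using q by simp
  show "submod q m (mat_apply q N m a ` vecs_mod q N)"
    by (rule submod_image[OF q0 submod_vecs_mod[OF q0] linear_on_mat_apply[OF q0]])
  fix z assume z: "z \<in> vecs_mod q m"
    and orth: "\<forall>g\<in>mat_apply q N m a ` vecs_mod q N. q dvd dot m g z"
  have "lcomb q N m z a = zero_vec"
    unfolding lcomb_eq_zero_iff
  proof (intro allI impI)
    fix i assume i: "i < N"
    have "q dvd dot m (mat_apply q N m a (unit_vec i)) z"
      using orth unit_vec_in_vecs_mod[OF q i] by blast
    moreover have "dot m (mat_apply q N m a (unit_vec i)) z mod q = (\<Sum>j<m. z j * a j i) mod q"
      unfolding dot_def using i
      by (intro sum_mod_cong)
        (simp add: mat_apply_apply dot_unit_vec dot_commute mod_simps mult.commute)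
    ultimately show "(\<Sum>j<m. z j * a j i) mod q = 0" by simp
  qed
  then show "z = zero_vec"
    using ind z vecs_mod_eq_zero_iff unfolding indep_mod_def by blast
qed

lemma dual_basis_exists:
  assumes "q > 1" "indep_mod q N m a"
  obtains B where "\<And>l. l < m \<Longrightarrow> B l \<in> vecs_mod q N"
    "\<And>l. l < m \<Longrightarrow> mat_apply q N m a (B l) = unit_vec l"
proof -
  have "\<forall>l. \<exists>b. l < m \<longrightarrow> b \<in> vecs_mod q N \<and> mat_apply q N m a b = unit_vec l"
    using mat_apply_surj[OF assms] unit_vec_in_vecs_mod[OF assms(1)] by (metis imageE)
  then show ?thesis using that by metis
qed

section \<open>Splitting off a retract\<close>

text \<open>A linear \<open>Phi : V \<rightarrow> \<int>\<^sub>Q\<^sup>j\<close> sending \<open>a\<^sub>0, \<dots>, a\<^sub>j\<^sub>-\<^sub>1\<close> to the unit vectors splits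
  \<open>V \<cong> \<int>\<^sub>Q\<^sup>j \<times> ker Phi\<close> via \<open>(x, k) \<mapsto> \<Sum> x\<^sub>i a\<^sub>i + k\<close>.\<close>

locale retraction =
  fixes Q :: nat and N j :: nat and V :: "(nat \<Rightarrow> int) set"
    and a :: "nat \<Rightarrow> nat \<Rightarrow> int" and Phi :: "(nat \<Rightarrow> int) \<Rightarrow> nat \<Rightarrow> int"
  assumes Q_gt_1: "Q > 1"
    and submod_V: "submod (int Q) N V"
    and a_in_V: "\<And>i. i < j \<Longrightarrow> a i \<in> V"
    and linear_Phi: "linear_on (int Q) N j V Phi"
    and Phi_a: "\<And>i. i < j \<Longrightarrow> Phi (a i) = unit_vec i"
begin

definition L :: "(nat \<Rightarrow> int) \<Rightarrow> nat \<Rightarrow> int" where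
  "L x = lcomb (int Q) N j x a"

definition K :: "(nat \<Rightarrow> int) set" where
  "K = {v\<in>V. Phi v = zero_vec}"

definition proj :: "(nat \<Rightarrow> int) \<Rightarrow> nat \<Rightarrow> int" where
  "proj v = vadd (int Q) N v (vscale (int Q) N (-1) (L (Phi v)))"

lemma q_pos: "int Q > 0"
  using Q_gt_1 by simp

lemma L_in_V: "L x \<in> V"
  unfolding L_def by (rule lcomb_in_submod[OF q_pos submod_V a_in_V])

lemma L_reduce: "L (reduce (int Q) j x) = L x"
  unfolding L_def by (rule lcomb_reduce_coeffs)

lemma Phi_L: "Phi (L x) = reduce (int Q) j x"
proof -
  have "Phi (L x) = lcomb (int Q) j j x (\<lambda>i. Phi (a i))"
    unfolding L_def by (rule linear_on_lcomb[OF q_pos submod_V linear_Phi a_in_V])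
  also have "\<dots> = lcomb (int Q) j j x unit_vec" using Phi_a by (intro lcomb_cong) auto
  finally show ?thesis by (simp add: lcomb_unit_vecs)
qed

lemma Phi_in_vecs_mod: "v \<in> V \<Longrightarrow> Phi v \<in> vecs_mod (int Q) j"
  by (rule linear_on_in[OF linear_Phi])

lemma submod_K: "submod (int Q) N K"
  unfolding K_def by (rule submod_kernel[OF q_pos submod_V linear_Phi])

lemma K_subset_V: "K \<subseteq> V"
  unfolding K_def by auto

lemma L_zero: "L zero_vec = zero_vec"
  unfolding L_def by (rule lcomb_zero_coeffs) simp

lemma L_eq_zero: "reduce (int Q) j x = zero_vec \<Longrightarrow> L x = zero_vec"
  using L_reduce[of x] L_zero by simp

lemma proj_in_K:
  assumes v: "v \<in> V"
  shows "proj v \<in> K"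
proof -
  have w: "vscale (int Q) N (-1) (L (Phi v)) \<in> V" by (rule submod_vscale[OF submod_V L_in_V])
  then have proj_V: "proj v \<in> V" unfolding proj_def by (rule submod_vadd[OF submod_V v])
  have "Phi (proj v) = vadd (int Q) j (Phi v) (Phi (vscale (int Q) N (-1) (L (Phi v))))"
    unfolding proj_def by (rule linear_on_vadd[OF linear_Phi v w])
  also have "Phi (vscale (int Q) N (-1) (L (Phi v))) = vscale (int Q) j (-1) (Phi (L (Phi v)))"
    by (rule linear_on_vscale[OF linear_Phi L_in_V])
  also have "Phi (L (Phi v)) = Phi v" by (simp add: Phi_L reduce_vecs_mod Phi_in_vecs_mod v)
  finally show "proj v \<in> K" using proj_V unfolding K_def by (simp add: vadd_neg)
qed

lemma L_Phi_proj: "v \<in> V \<Longrightarrow> vadd (int Q) N (L (Phi v)) (proj v) = v"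
  unfolding proj_def by (rule vadd_neg_cancel_left[OF q_pos submod_subset[OF submod_V]])

lemma Phi_decomp: "x \<in> vecs_mod (int Q) j \<Longrightarrow> k \<in> K \<Longrightarrow> Phi (vadd (int Q) N (L x) k) = x"
  using K_subset_V unfolding K_def
  by (auto simp: linear_on_vadd[OF linear_Phi] L_in_V Phi_L reduce_vecs_mod vadd_zero_right)

lemma proj_decomp: "x \<in> vecs_mod (int Q) j \<Longrightarrow> k \<in> K \<Longrightarrow> proj (vadd (int Q) N (L x) k) = k"
  unfolding proj_def using Phi_decomp K_subset_V
  by (simp add: vadd_neg_cancel_right[OF q_pos] submod_subset[OF submod_V] subsetD)

lemma decomp_eq_zero_iff:
  assumes k: "k \<in> K"
  shows "vadd (int Q) N (L x) k = zero_vec \<longleftrightarrow> reduce (int Q) j x = zero_vec \<and> k = zero_vec"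
proof
  assume zero: "vadd (int Q) N (L x) k = zero_vec"
  have x: "reduce (int Q) j x \<in> vecs_mod (int Q) j" by (rule reduce_in_vecs_mod[OF q_pos])
  have "zero_vec \<in> vecs_mod (int Q) N" using q_pos by (rule zero_vec_in_vecs_mod)
  then have "proj zero_vec = zero_vec"
    unfolding proj_def using linear_on_zero[OF submod_V linear_Phi]
    by (simp add: L_zero vadd_zero_left vscale_zero_vec)
  moreover have "Phi zero_vec = zero_vec" by (rule linear_on_zero[OF submod_V linear_Phi])
  ultimately show "reduce (int Q) j x = zero_vec \<and> k = zero_vec"
    using zero Phi_decomp[OF x k] proj_decomp[OF x k] by (simp add: L_reduce)
next
  assume zero: "reduce (int Q) j x = zero_vec \<and> k = zero_vec"
  then have "L x = zero_vec" by (intro L_eq_zero) simp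
  with zero show "vadd (int Q) N (L x) k = zero_vec"
    by (simp add: vadd_zero_right zero_vec_in_vecs_mod[OF q_pos])
qed

lemma vscale_decomp:
  "vscale (int Q) N c (vadd (int Q) N (L x) k)
    = vadd (int Q) N (L (\<lambda>i. c * x i)) (vscale (int Q) N c k)"
  unfolding L_def using q_pos
  by (intro vecs_mod_eqI[OF vscale_in_vecs_mod vadd_in_vecs_mod])
    (simp_all add: vadd_apply vscale_apply lcomb_apply mod_simps sum_distrib_left algebra_simps)

lemma vadd_L_L: "vadd (int Q) N (L y) (vadd (int Q) N (L z) k)
    = vadd (int Q) N (L (\<lambda>i. y i + z i)) k"
  unfolding L_def using q_pos
  by (intro vecs_mod_eqI[OF vadd_in_vecs_mod vadd_in_vecs_mod])
    (simp_all add: vadd_apply lcomb_apply mod_simps distrib_right sum.distrib add.assoc)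

lemma decomp_image:
  assumes X: "X \<subseteq> vecs_mod (int Q) j" and S: "S \<subseteq> K"
  shows "(\<lambda>(x, k). vadd (int Q) N (L x) k) ` (X \<times> S) = {v\<in>V. Phi v \<in> X \<and> proj v \<in> S}"
proof (rule set_eqI, rule iffI)
  fix v assume "v \<in> (\<lambda>(x, k). vadd (int Q) N (L x) k) ` (X \<times> S)"
  then obtain x k where xk: "x \<in> X" "k \<in> S" "v = vadd (int Q) N (L x) k" by auto
  then have x: "x \<in> vecs_mod (int Q) j" and k: "k \<in> K" using X S by auto
  then have "v \<in> V" using xk K_subset_V by (auto intro: submod_vadd[OF submod_V] L_in_V)
  with xk show "v \<in> {v\<in>V. Phi v \<in> X \<and> proj v \<in> S}"
    by (simp add: Phi_decomp[OF x k] proj_decomp[OF x k])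
next
  fix v assume "v \<in> {v\<in>V. Phi v \<in> X \<and> proj v \<in> S}"
  then show "v \<in> (\<lambda>(x, k). vadd (int Q) N (L x) k) ` (X \<times> S)"
    using L_Phi_proj by (intro image_eqI[of _ _ "(Phi v, proj v)"]) auto
qed

lemma card_decomp_preimage:
  assumes X: "X \<subseteq> vecs_mod (int Q) j" and S: "S \<subseteq> K"
  shows "card {v\<in>V. Phi v \<in> X \<and> proj v \<in> S} = card X * card S"
proof -
  have "inj_on (\<lambda>(x, k). vadd (int Q) N (L x) k) (X \<times> S)"
  proof (rule inj_onI, clarify)
    fix x k x' k' assume xk: "x \<in> X" "k \<in> S" "x' \<in> X" "k' \<in> S"
      and eq: "vadd (int Q) N (L x) k = vadd (int Q) N (L x') k'"
    then have "x \<in> vecs_mod (int Q) j" "k \<in> K" "x' \<in> vecs_mod (int Q) j" "k' \<in> K" using X S by auto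
    then show "x = x' \<and> k = k'"
      using arg_cong[OF eq, of Phi] arg_cong[OF eq, of proj] by (simp add: Phi_decomp proj_decomp)
  qed
  then have "card (X \<times> S) = card {v\<in>V. Phi v \<in> X \<and> proj v \<in> S}"
    using card_image decomp_image[OF X S] by fastforce
  then show ?thesis by (simp add: card_cartesian_product)
qed

lemma torsion_decomp_iff:
  assumes v: "v \<in> V"
  shows "vscale (int Q) N c v = zero_vec \<longleftrightarrow>
    vscale (int Q) j c (Phi v) = zero_vec \<and> vscale (int Q) N c (proj v) = zero_vec"
proof -
  have "vscale (int Q) N c v = vscale (int Q) N c (vadd (int Q) N (L (Phi v)) (proj v))"
    by (simp only: L_Phi_proj[OF v])
  also have "\<dots> = vadd (int Q) N (L (\<lambda>i. c * Phi v i)) (vscale (int Q) N c (proj v))"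
    by (rule vscale_decomp)
  finally have "vscale (int Q) N c v
      = vadd (int Q) N (L (\<lambda>i. c * Phi v i)) (vscale (int Q) N c (proj v))" .
  moreover have "vscale (int Q) N c (proj v) \<in> K"
    by (rule submod_vscale[OF submod_K proj_in_K[OF v]])
  ultimately show ?thesis by (simp add: decomp_eq_zero_iff vscale_def)
qed

lemma card_torsion_K:
  assumes c: "c dvd Q" and TV: "card (torsion (int Q) N (int c) V) = c ^ r" and jr: "j \<le> r"
  shows "card (torsion (int Q) N (int c) K) = c ^ (r - j)"
proof -
  let ?T = "torsion (int Q) j (int c) (vecs_mod (int Q) j)"
  have "torsion (int Q) N (int c) V = {v\<in>V. Phi v \<in> ?T \<and> proj v \<in> torsion (int Q) N (int c) K}"
    unfolding torsion_def using torsion_decomp_iff Phi_in_vecs_mod proj_in_K by auto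
  moreover have "card {v\<in>V. Phi v \<in> ?T \<and> proj v \<in> torsion (int Q) N (int c) K}
      = card ?T * card (torsion (int Q) N (int c) K)"
    by (rule card_decomp_preimage) (auto simp: torsion_def)
  moreover have "card ?T = c ^ j" using card_torsion_vecs_mod[OF _ c] Q_gt_1 by simp
  ultimately have "c ^ r = c ^ j * card (torsion (int Q) N (int c) K)" using TV by simp
  moreover have "c ^ r = c ^ j * c ^ (r - j)" using jr by (simp flip: power_add)
  moreover have "c > 0" using c Q_gt_1 by (auto intro: gr0I)
  ultimately show ?thesis by simp
qed

lemma lcomb_extend:
  assumes v: "v \<in> V"
  shows "lcomb (int Q) N (Suc j) y (a(j := v))
    = vadd (int Q) N (L (\<lambda>i. y i + y j * Phi v i)) (vscale (int Q) N (y j) (proj v))"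
proof -
  have "lcomb (int Q) N (Suc j) y (a(j := v)) = vadd (int Q) N (L y) (vscale (int Q) N (y j) v)"
    using lcomb_cong[of j "a(j := v)" a] by (simp add: lcomb_Suc[OF q_pos] L_def)
  moreover have "vscale (int Q) N (y j) v
      = vadd (int Q) N (L (\<lambda>i. y j * Phi v i)) (vscale (int Q) N (y j) (proj v))"
    using vscale_decomp[of "y j" "Phi v" "proj v"] by (simp only: L_Phi_proj[OF v])
  ultimately show ?thesis by (simp only: vadd_L_L)
qed

text \<open>A dependency among \<open>a\<^sub>0, \<dots>, a\<^sub>j\<^sub>-\<^sub>1, v\<close> with last coefficient \<open>x\<close> exists iff
  \<open>x\<close> kills \<open>proj v\<close>: the other coefficients are then forced to be \<open>-x Phi v\<close>.\<close>

lemma indep_extend_iff: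
  assumes v: "v \<in> V"
  shows "indep_mod (int Q) N (Suc j) (a(j := v)) \<longleftrightarrow> proj v \<in> full_order (int Q) N K"
proof
  have kill: "vscale (int Q) N c (proj v) \<in> K" for c
    by (rule submod_vscale[OF submod_K proj_in_K[OF v]])
  {
    assume ind: "indep_mod (int Q) N (Suc j) (a(j := v))"
    have "int Q dvd x" if x: "vscale (int Q) N x (proj v) = zero_vec" for x
    proof -
      define y where "y i = (if i < j then - (x * Phi v i) else if i = j then x else 0)" for i
      have "reduce (int Q) j (\<lambda>i. y i + y j * Phi v i) = zero_vec"
        unfolding reduce_eq_zero_iff y_def by simp
      then have "L (\<lambda>i. y i + y j * Phi v i) = zero_vec" by (rule L_eq_zero)
      moreover have "vscale (int Q) N (y j) (proj v) = zero_vec" using x by (simp add: y_def)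
      ultimately have "lcomb (int Q) N (Suc j) y (a(j := v)) = zero_vec"
        by (simp add: lcomb_extend[OF v] vadd_zero_right zero_vec_in_vecs_mod[OF q_pos])
      then have "y j mod int Q = 0" using ind unfolding indep_mod_def by blast
      then show ?thesis by (simp add: y_def dvd_eq_mod_eq_0)
    qed
    then show "proj v \<in> full_order (int Q) N K"
      using proj_in_K[OF v] unfolding full_order_def by auto
  }
  assume full: "proj v \<in> full_order (int Q) N K"
  show "indep_mod (int Q) N (Suc j) (a(j := v))"
    unfolding indep_mod_def
  proof (intro allI impI)
    fix y l assume "lcomb (int Q) N (Suc j) y (a(j := v)) = zero_vec" and l: "l < Suc j"
    then have "reduce (int Q) j (\<lambda>i. y i + y j * Phi v i) = zero_vec"
      and "vscale (int Q) N (y j) (proj v) = zero_vec"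
      using kill by (simp_all add: lcomb_extend[OF v] decomp_eq_zero_iff)
    then have rest: "\<forall>i<j. (y i + y j * Phi v i) mod int Q = 0" and last: "int Q dvd y j"
      using full unfolding full_order_def reduce_eq_zero_iff by auto
    show "y l mod int Q = 0"
    proof (cases "l = j")
      case True
      then show ?thesis using last by (simp add: dvd_eq_mod_eq_0)
    next
      case False
      then have "int Q dvd (y l + y j * Phi v l) - y j * Phi v l"
        using l rest last by (intro dvd_diff) (auto simp: dvd_eq_mod_eq_0)
      then show ?thesis by (simp add: dvd_eq_mod_eq_0)
    qed
  qed
qed

theorem card_indep_extensions:
  assumes jr: "j \<le> r" and TV: "\<And>c. c dvd Q \<Longrightarrow> card (torsion (int Q) N (int c) V) = c ^ r"
  shows "real (card {v\<in>V. indep_mod (int Q) N (Suc j) (a(j := v))}) = real Q ^ j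
      * unimodular_count Q (r - j)"
proof -
  have "{v\<in>V. indep_mod (int Q) N (Suc j) (a(j := v))}
      = {v\<in>V. Phi v \<in> vecs_mod (int Q) j \<and> proj v \<in> full_order (int Q) N K}"
    using indep_extend_iff Phi_in_vecs_mod by auto
  then have "card {v\<in>V. indep_mod (int Q) N (Suc j) (a(j := v))} = Q ^ j
      * card (full_order (int Q) N K)"
    using card_decomp_preimage[of "vecs_mod (int Q) j" "full_order (int Q) N K"]
    by (simp add: card_vecs_mod full_order_def)
  moreover have "real (card (full_order (int Q) N K)) = unimodular_count Q (r - j)"
    using card_full_order[OF submod_K] card_torsion_K[OF _ TV jr] Q_gt_1 by simp
  ultimately show ?thesis by simp
qed

end

section \<open>The symplectic form\<close>

lemma sum_lessThan_add:
  fixes n m :: nat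
  shows "(\<Sum>t<n + m. f t) = (\<Sum>t<n. f t) + (\<Sum>i<m. f (n + i))"
  by (induction m) (simp_all add: add.assoc)

text \<open>\<open>symp_dual n u\<close> is the row \<open>u\<^sup>T \<Lambda>\<close>, so that \<open>symp q n u v\<close> is a dot product.\<close>

definition symp_dual :: "nat \<Rightarrow> (nat \<Rightarrow> int) \<Rightarrow> nat \<Rightarrow> int" where
  "symp_dual n u = (\<lambda>t. if t < n then - u (n + t) else u (t - n))"

lemma dot_symp_dual: "dot (2 * n) (symp_dual n u) v = (\<Sum>i<n. u i * v (n + i) - u (n + i) * v i)"
  unfolding dot_def mult_2 sum_lessThan_add
  by (simp add: symp_dual_def sum.distrib sum_subtractf sum_negf)

lemma symp_eq_dot: "symp q n u v = dot (2 * n) (symp_dual n u) v mod q"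
  unfolding symp_def dot_symp_dual ..

lemma symp_swap_eq_dot: "symp q n v u = - dot (2 * n) (symp_dual n u) v mod q"
  unfolding symp_def dot_symp_dual
  by (simp add: sum_negf[symmetric] algebra_simps)

lemma symp_antisym:
  assumes "symp q n u v = 0"
  shows "symp q n v u = 0"
proof -
  have "q dvd dot (2 * n) (symp_dual n u) v" using assms by (simp add: symp_eq_dot dvd_eq_mod_eq_0)
  then show ?thesis by (simp add: symp_swap_eq_dot dvd_eq_mod_eq_0[symmetric])
qed

lemma symp_self: "symp q n v v = 0"
  unfolding symp_def by (simp add: mult.commute)

lemma symp_lcomb_left:
  "symp q n (lcomb q (2 * n) m u a) v = (\<Sum>j<m. u j * symp q n (a j) v) mod q"
proof -
  have "symp q n (lcomb q (2 * n) m u a) v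
      = (\<Sum>i<n. (\<Sum>j<m. u j * a j i) * v (n + i) - (\<Sum>j<m. u j * a j (n + i)) * v i) mod q"
    unfolding symp_def
    by (intro sum_mod_cong mod_diff_cong) (simp_all add: lcomb_apply mod_simps)
  also have "(\<Sum>i<n. (\<Sum>j<m. u j * a j i) * v (n + i) - (\<Sum>j<m. u j * a j (n + i)) * v i)
      = (\<Sum>j<m. u j * (\<Sum>i<n. a j i * v (n + i) - a j (n + i) * v i))"
    by (simp add: sum_distrib_left sum_distrib_right sum_subtractf[symmetric]
        sum.swap[of _ "{..<n}"]
        algebra_simps)
  also have "\<dots> mod q = (\<Sum>j<m. u j * symp q n (a j) v) mod q"
    unfolding symp_def by (intro sum_mod_cong) (simp add: mod_simps)
  finally show ?thesis .
qed

lemma symp_lcomb_isotropic: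
  assumes iso: "\<And>i l. i < m \<Longrightarrow> l < m \<Longrightarrow> symp q n (a i) (a l) = 0"
  shows "symp q n (lcomb q (2 * n) m u a) (lcomb q (2 * n) m w a) = 0"
proof -
  have "symp q n (lcomb q (2 * n) m w a) (a j) = 0" if "j < m" for j
    using that iso by (simp add: symp_lcomb_left)
  then have "symp q n (a j) (lcomb q (2 * n) m w a) = 0" if "j < m" for j
    using that symp_antisym by blast
  then show ?thesis by (simp add: symp_lcomb_left)
qed

lemma indep_mod_symp_dual:
  assumes ind: "indep_mod q (2 * n) j a"
  shows "indep_mod q (2 * n) j (\<lambda>l. symp_dual n (a l))"
  unfolding indep_mod_def
proof (rule allI, rule impI)
  fix x assume "lcomb q (2 * n) j x (\<lambda>l. symp_dual n (a l)) = zero_vec"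
  then have X: "\<forall>t<2 * n. (\<Sum>l<j. x l * symp_dual n (a l) t) mod q = 0"
    unfolding lcomb_eq_zero_iff .
  have "(\<Sum>l<j. x l * a l i) mod q = 0" if i: "i < 2 * n" for i
  proof (cases "i < n")
    case True
    then show ?thesis using X[rule_format, of "n + i"] by (simp add: symp_dual_def)
  next
    case False
    then have "i - n < 2 * n" "i - n < n" "n + (i - n) = i" using i by auto
    then have "(\<Sum>l<j. - (x l * a l i)) mod q = 0"
      using X[rule_format, of "i - n"] by (simp add: symp_dual_def)
    then have "q dvd - (\<Sum>l<j. x l * a l i)" by (simp add: sum_negf dvd_eq_mod_eq_0)
    then show ?thesis by (simp add: dvd_eq_mod_eq_0[symmetric])
  qed
  then have "lcomb q (2 * n) j x a = zero_vec" unfolding lcomb_eq_zero_iff by blast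
  then show "\<forall>l<j. x l mod q = 0" using ind unfolding indep_mod_def by blast
qed

section \<open>Extending a frame by one vector\<close>

lemma mat_apply_torsion_image:
  fixes Q c :: nat
  assumes Q: "Q > 0" and c: "c dvd Q"
    and surj: "mat_apply (int Q) N m A ` vecs_mod (int Q) N = vecs_mod (int Q) m"
  shows "mat_apply (int Q) N m A ` torsion (int Q) N (int c) (vecs_mod (int Q) N)
    = torsion (int Q) m (int c) (vecs_mod (int Q) m)"
proof -
  have "mat_apply (int Q) N m A ` vscale (int Q) N (int (Q div c)) ` vecs_mod (int Q) N
      = vscale (int Q) m (int (Q div c)) ` mat_apply (int Q) N m A ` vecs_mod (int Q) N"
    using Q by (simp add: image_image mat_apply_vscale)
  then show ?thesis using Q c surj by (simp add: torsion_vecs_mod_eq_image)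
qed

lemma card_torsion_kernel:
  fixes Q c :: nat
  assumes Q: "Q > 0" and c: "c dvd Q" and mN: "m \<le> N"
    and surj: "mat_apply (int Q) N m A ` vecs_mod (int Q) N = vecs_mod (int Q) m"
  shows "card (torsion (int Q) N (int c) {v\<in>vecs_mod (int Q) N. mat_apply (int Q) N m A v = zero_vec})
    = c ^ (N - m)"
proof -
  have q: "int Q > 0" using Q by simp
  let ?G = "torsion (int Q) N (int c) (vecs_mod (int Q) N)"
  have "card ?G = card {v\<in>?G. mat_apply (int Q) N m A v = zero_vec}
      * card (mat_apply (int Q) N m A ` ?G)"
    by (rule card_kernel_mult_card_image[OF q submod_torsion[OF q submod_vecs_mod[OF q]]
          linear_on_mat_apply[OF q]])
  moreover have "{v\<in>?G. mat_apply (int Q) N m A v = zero_vec}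
      = torsion (int Q) N (int c) {v\<in>vecs_mod (int Q) N. mat_apply (int Q) N m A v = zero_vec}"
    unfolding torsion_def by auto
  ultimately have "c ^ N
      = card (torsion (int Q) N (int c)
          {v\<in>vecs_mod (int Q) N. mat_apply (int Q) N m A v = zero_vec}) * c ^ m"
    using card_torsion_vecs_mod[OF Q c] mat_apply_torsion_image[OF Q c surj] by simp
  moreover have "c ^ N = c ^ (N - m) * c ^ m" using mN by (simp flip: power_add)
  moreover have "c > 0" using c Q by (auto intro: gr0I)
  ultimately show ?thesis by simp
qed

text \<open>The retraction is built from a dual basis \<open>B\<close>: the rows of \<open>Phi\<close> pair against the \<open>B l\<close>.\<close>

lemma card_indep_extensions_vecs_mod:
  fixes Q :: nat
  assumes Q: "Q > 1" and js: "j \<le> s"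
    and a: "\<And>i. i < j \<Longrightarrow> a i \<in> vecs_mod (int Q) s" and ind: "indep_mod (int Q) s j a"
  shows "real (card {v \<in> vecs_mod (int Q) s. indep_mod (int Q) s (Suc j) (a(j := v))})
    = real Q ^ j * unimodular_count Q (s - j)"
proof -
  have q: "int Q > 0" "int Q > 1" using Q by auto
  obtain B where B: "\<And>l. l < j \<Longrightarrow> B l \<in> vecs_mod (int Q) s"
    "\<And>l. l < j \<Longrightarrow> mat_apply (int Q) s j a (B l) = unit_vec l"
    using dual_basis_exists[OF q(2) ind] by blast
  interpret retraction Q s j "vecs_mod (int Q) s" a "mat_apply (int Q) s j B"
  proof
    fix i assume i: "i < j"
    show "mat_apply (int Q) s j B (a i) = unit_vec i"
    proof (rule vecs_mod_eqI[OF mat_apply_in_vecs_mod[OF q(1)] unit_vec_in_vecs_mod[OF q(2) i]])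
      fix l assume l: "l < j"
      have "mat_apply (int Q) s j B (a i) l = mat_apply (int Q) s j a (B l) i"
        using i l by (simp add: mat_apply_apply dot_commute)
      then show "mat_apply (int Q) s j B (a i) l mod int Q = unit_vec i l mod int Q"
        using B(2)[OF l] by (simp add: unit_vec_commute)
    qed
  qed (use Q a q submod_vecs_mod linear_on_mat_apply in auto)
  show ?thesis
    using card_indep_extensions[OF js] card_torsion_vecs_mod Q by simp
qed

lemma card_isotropic_extensions:
  fixes Q :: nat
  assumes Q: "Q > 1" and jn: "j \<le> n"
    and a: "\<And>i. i < j \<Longrightarrow> a i \<in> vecs_mod (int Q) (2 * n)" and ind: "indep_mod (int Q) (2 * n) j a"
    and iso: "\<And>i l. i < j \<Longrightarrow> l < j \<Longrightarrow> symp (int Q) n (a i) (a l) = 0"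
  shows "real (card {v \<in> vecs_mod (int Q) (2 * n).
      (\<forall>i<j. symp (int Q) n (a i) v = 0) \<and> indep_mod (int Q) (2 * n) (Suc j) (a(j := v))})
    = real Q ^ j * unimodular_count Q (2 * n - j - j)"
proof -
  have q: "int Q > 0" "int Q > 1" using Q by auto
  let ?f = "mat_apply (int Q) (2 * n) j (\<lambda>l. symp_dual n (a l))"
  let ?V = "{v\<in>vecs_mod (int Q) (2 * n). ?f v = zero_vec}"
  have V_iff: "v \<in> ?V \<longleftrightarrow> v \<in> vecs_mod (int Q) (2 * n) \<and> (\<forall>i<j. symp (int Q) n (a i) v = 0)" for v
    by (auto simp: mat_apply_eq_zero_iff mat_apply_apply symp_eq_dot)
  have ind': "indep_mod (int Q) (2 * n) j (\<lambda>l. symp_dual n (a l))"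
    by (rule indep_mod_symp_dual[OF ind])
  obtain B where B: "\<And>l. l < j \<Longrightarrow> B l \<in> vecs_mod (int Q) (2 * n)" "\<And>l. l < j \<Longrightarrow> ?f (B l) = unit_vec l"
    using dual_basis_exists[OF q(2) ind'] by blast
  interpret retraction Q "2 * n" j ?V a "mat_apply (int Q) (2 * n) j (\<lambda>l t. - symp_dual n (B l) t)"
  proof
    show "submod (int Q) (2 * n) ?V"
      by (rule submod_kernel[OF q(1) submod_vecs_mod[OF q(1)] linear_on_mat_apply[OF q(1)]])
    fix i assume i: "i < j"
    show "a i \<in> ?V" using V_iff a i iso by auto
    show "mat_apply (int Q) (2 * n) j (\<lambda>l t. - symp_dual n (B l) t) (a i) = unit_vec i"
    proof (rule vecs_mod_eqI[OF mat_apply_in_vecs_mod[OF q(1)] unit_vec_in_vecs_mod[OF q(2) i]])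
      fix l assume l: "l < j"
      have "mat_apply (int Q) (2 * n) j (\<lambda>l t. - symp_dual n (B l) t) (a i) l
          = symp (int Q) n (a i) (B l)"
        using l by (simp add: mat_apply_apply symp_swap_eq_dot dot_def sum_negf)
      also have "\<dots> = ?f (B l) i" using i by (simp add: mat_apply_apply symp_eq_dot)
      finally show "mat_apply (int Q) (2 * n) j (\<lambda>l t. - symp_dual n (B l) t) (a i) l mod int Q
          = unit_vec i l mod int Q"
        using B(2)[OF l] by (simp add: unit_vec_commute)
    qed
  qed (use Q linear_on_mat_apply q in auto)
  have surj: "?f ` vecs_mod (int Q) (2 * n) = vecs_mod (int Q) j"
    by (rule mat_apply_surj[OF q(2) ind'])
  have "real (card {v\<in>?V. indep_mod (int Q) (2 * n) (Suc j) (a(j := v))})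
      = real Q ^ j * unimodular_count Q (2 * n - j - j)"
    using card_indep_extensions[of "2 * n - j"] card_torsion_kernel[OF _ _ _ surj] Q jn by simp
  moreover have "{v\<in>?V. indep_mod (int Q) (2 * n) (Suc j) (a(j := v))}
    = {v \<in> vecs_mod (int Q) (2 * n).
      (\<forall>i<j. symp (int Q) n (a i) v = 0) \<and> indep_mod (int Q) (2 * n) (Suc j) (a(j := v))}"
    using V_iff by blast
  ultimately show ?thesis by simp
qed

section \<open>Counting frames\<close>

definition indep_frames :: "int \<Rightarrow> nat \<Rightarrow> nat \<Rightarrow> (nat \<Rightarrow> nat \<Rightarrow> int) set" where
  "indep_frames q N j = {a. (\<forall>i<j. a i \<in> vecs_mod q N) \<and> (\<forall>i\<ge>j. a i = zero_vec)
      \<and> indep_mod q N j a}"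

definition isotropic_frames :: "int \<Rightarrow> nat \<Rightarrow> nat \<Rightarrow> (nat \<Rightarrow> nat \<Rightarrow> int) set" where
  "isotropic_frames q n j = {a \<in> indep_frames q (2 * n) j. \<forall>i<j. \<forall>l<j. symp q n (a i) (a l) = 0}"

lemma finite_indep_frames: "finite (indep_frames q N j)"
proof (rule finite_subset)
  show "indep_frames q N j \<subseteq> tuples j (vecs_mod q N) zero_vec"
    unfolding indep_frames_def tuples_def by auto
  show "finite (tuples j (vecs_mod q N) zero_vec)" using finite_card_tuples[OF finite_vecs_mod]
    by blast
qed

lemma finite_isotropic_frames: "finite (isotropic_frames q n j)"
  unfolding isotropic_frames_def using finite_indep_frames by simp

lemma indep_mod_Suc_imp:
  assumes "indep_mod q N (Suc j) a"
  shows "indep_mod q N j a"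
  unfolding indep_mod_def
proof (rule allI, rule impI)
  fix x assume x: "lcomb q N j x a = zero_vec"
  have "(\<Sum>l<j. (x(j := 0)) l * a l i) = (\<Sum>l<j. x l * a l i)" for i
    by (rule sum.cong) auto
  then have "lcomb q N (Suc j) (x(j := 0)) a = lcomb q N j x a"
    unfolding lcomb_eq_iff by simp
  then have "lcomb q N (Suc j) (x(j := 0)) a = zero_vec" using x by simp
  then have zero: "(x(j := 0)) l mod q = 0" if "l < Suc j" for l
    using indep_modD[OF assms] that by blast
  show "\<forall>l<j. x l mod q = 0"
  proof (intro allI impI)
    fix l assume "l < j"
    then show "x l mod q = 0" using zero[of l] by simp
  qed
qed

lemma fun_upd_image_Sigma:
  assumes "\<And>a. a \<in> A \<Longrightarrow> a j = d"
  shows "(\<lambda>(a, v). a(j := v)) ` (SIGMA a:A. E a) = {b. b(j := d) \<in> A \<and> b j \<in> E (b(j := d))}"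
proof (rule set_eqI, rule iffI)
  fix b assume "b \<in> (\<lambda>(a, v). a(j := v)) ` (SIGMA a:A. E a)"
  then obtain a v where "a \<in> A" "v \<in> E a" "b = a(j := v)" by auto
  moreover have "a(j := d) = a" using assms \<open>a \<in> A\<close> by auto
  ultimately show "b \<in> {b. b(j := d) \<in> A \<and> b j \<in> E (b(j := d))}" by simp
next
  fix b assume "b \<in> {b. b(j := d) \<in> A \<and> b j \<in> E (b(j := d))}"
  then show "b \<in> (\<lambda>(a, v). a(j := v)) ` (SIGMA a:A. E a)"
    by (intro image_eqI[of _ _ "(b(j := d), b j)"]) auto
qed

lemma inj_on_fun_upd_Sigma:
  assumes "\<And>a. a \<in> A \<Longrightarrow> a j = d"
  shows "inj_on (\<lambda>(a, v). a(j := v)) (SIGMA a:A. E a)"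
proof (rule inj_onI, clarify)
  fix a v a' v' assume a: "a \<in> A" "a' \<in> A" and eq: "a(j := v) = a'(j := v')"
  have "a i = a' i" for i
  proof (cases "i = j")
    case True
    then show ?thesis using assms[OF a(1)] assms[OF a(2)] by simp
  next
    case False
    then show ?thesis using fun_cong[OF eq, of i] by simp
  qed
  then have "a = a'" by (rule ext)
  moreover have "v = v'" using fun_cong[OF eq, of j] by simp
  ultimately show "a = a' \<and> v = v'" by simp
qed

lemma card_frames_by_extension:
  fixes F :: "nat \<Rightarrow> (nat \<Rightarrow> 'a) set"
  assumes F0: "F 0 = {\<lambda>_. d}" and fin: "\<And>j. finite (F j)"
    and F_d: "\<And>j a. a \<in> F j \<Longrightarrow> a j = d"
    and F_Suc: "\<And>j b. b \<in> F (Suc j) \<longleftrightarrow> b(j := d) \<in> F j \<and> b j \<in> E j (b(j := d))"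
  shows "\<forall>j<m. \<forall>a\<in>F j. finite (E j a) \<and> real (card (E j a)) = c j
    \<Longrightarrow> real (card (F m)) = (\<Prod>j<m. c j)"
proof (induction m)
  case 0
  then show ?case using F0 by simp
next
  case (Suc m)
  then have E: "finite (E m a)" "real (card (E m a)) = c m" if "a \<in> F m" for a
    using that by simp_all
  have "(\<lambda>(a, v). a(m := v)) ` (SIGMA a:F m. E m a) = {b. b(m := d) \<in> F m \<and> b m \<in> E m (b(m := d))}"
    by (rule fun_upd_image_Sigma) (rule F_d)
  also have "\<dots> = F (Suc m)" using F_Suc by blast
  moreover have "inj_on (\<lambda>(a, v). a(m := v)) (SIGMA a:F m. E m a)"
    by (rule inj_on_fun_upd_Sigma) (rule F_d)
  ultimately have "card (F (Suc m)) = card (SIGMA a:F m. E m a)"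
    using card_image by fastforce
  also have "\<dots> = (\<Sum>a\<in>F m. card (E m a))"
    using E(1) by (intro card_SigmaI[OF fin]) simp
  finally have "real (card (F (Suc m))) = (\<Sum>a\<in>F m. c m)" using E(2) by simp
  also have "\<dots> = (\<Prod>j<m. c j) * c m" using Suc by simp
  finally show ?case by simp
qed

lemma indep_frames_vanish: "a \<in> indep_frames q N j \<Longrightarrow> a j = zero_vec"
  unfolding indep_frames_def by simp

lemma indep_frames_Suc_iff:
  "b \<in> indep_frames q N (Suc j) \<longleftrightarrow> b(j := zero_vec) \<in> indep_frames q N j
     \<and> b j \<in> {v \<in> vecs_mod q N. indep_mod q N (Suc j) ((b(j := zero_vec))(j := v))}"
proof -
  have "indep_mod q N j (b(j := zero_vec)) \<longleftrightarrow> indep_mod q N j b"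
    by (rule indep_mod_cong) simp
  then show ?thesis
    unfolding indep_frames_def using indep_mod_Suc_imp
    by (auto simp: less_Suc_eq Suc_le_eq)
qed

lemma isotropic_frames_Suc_iff:
  "b \<in> isotropic_frames q n (Suc j) \<longleftrightarrow> b(j := zero_vec) \<in> isotropic_frames q n j
     \<and> b j \<in> {v \<in> vecs_mod q (2 * n). (\<forall>i<j. symp q n ((b(j := zero_vec)) i) v = 0)
        \<and> indep_mod q (2 * n) (Suc j) ((b(j := zero_vec))(j := v))}"
proof -
  have pairs: "(\<forall>i<Suc j. \<forall>l<Suc j. symp q n (b i) (b l) = 0) \<longleftrightarrow>
      (\<forall>i<j. \<forall>l<j. symp q n (b i) (b l) = 0) \<and> (\<forall>i<j. symp q n (b i) (b j) = 0)"
    using symp_antisym symp_self by (auto simp: less_Suc_eq)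
  have "b \<in> isotropic_frames q n (Suc j) \<longleftrightarrow>
      b \<in> indep_frames q (2 * n) (Suc j) \<and> (\<forall>i<Suc j. \<forall>l<Suc j. symp q n (b i) (b l) = 0)"
    unfolding isotropic_frames_def by simp
  also have "\<dots> \<longleftrightarrow> (b(j := zero_vec) \<in> indep_frames q (2 * n) j
      \<and> b j \<in> {v \<in> vecs_mod q (2 * n). indep_mod q (2 * n) (Suc j) ((b(j := zero_vec))(j := v))})
      \<and> (\<forall>i<j. \<forall>l<j. symp q n (b i) (b l) = 0) \<and> (\<forall>i<j. symp q n (b i) (b j) = 0)"
    by (simp only: indep_frames_Suc_iff pairs)
  also have "\<dots> \<longleftrightarrow> b(j := zero_vec) \<in> isotropic_frames q n j
     \<and> b j \<in> {v \<in> vecs_mod q (2 * n). (\<forall>i<j. symp q n ((b(j := zero_vec)) i) v = 0)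
        \<and> indep_mod q (2 * n) (Suc j) ((b(j := zero_vec))(j := v))}"
    unfolding isotropic_frames_def by auto
  finally show ?thesis .
qed

lemma card_indep_frames:
  fixes Q :: nat
  assumes Q: "Q > 1" and ms: "m \<le> s"
  shows "real (card (indep_frames (int Q) s m)) = (\<Prod>j<m. real Q ^ j * unimodular_count Q (s - j))"
proof (rule card_frames_by_extension[where F = "indep_frames (int Q) s" and d = zero_vec
      and E = "\<lambda>j a. {v \<in> vecs_mod (int Q) s. indep_mod (int Q) s (Suc j) (a(j := v))}"])
  show "indep_frames (int Q) s 0 = {\<lambda>_. zero_vec}"
    unfolding indep_frames_def indep_mod_def by auto
  show "finite (indep_frames (int Q) s j)" for j by (rule finite_indep_frames)
  show "a j = zero_vec" if "a \<in> indep_frames (int Q) s j" for a j using that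
    by (rule indep_frames_vanish)
  show "b \<in> indep_frames (int Q) s (Suc j) \<longleftrightarrow> b(j := zero_vec) \<in> indep_frames (int Q) s j
     \<and> b j \<in> {v \<in> vecs_mod (int Q) s.
          indep_mod (int Q) s (Suc j) ((b(j := zero_vec))(j := v))}" for j b
    by (rule indep_frames_Suc_iff)
  show "\<forall>j<m. \<forall>a\<in>indep_frames (int Q) s j.
      finite {v \<in> vecs_mod (int Q) s. indep_mod (int Q) s (Suc j) (a(j := v))}
    \<and> real (card {v \<in> vecs_mod (int Q) s. indep_mod (int Q) s (Suc j) (a(j := v))})
      = real Q ^ j * unimodular_count Q (s - j)"
    using ms Q
      by (auto intro!: card_indep_extensions_vecs_mod simp: indep_frames_def finite_vecs_mod)
qed

lemma card_isotropic_frames: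
  fixes Q :: nat
  assumes Q: "Q > 1" and mn: "m \<le> n"
  shows "real (card (isotropic_frames (int Q) n m))
    = (\<Prod>j<m. real Q ^ j * unimodular_count Q (2 * n - j - j))"
proof (rule card_frames_by_extension[where F = "isotropic_frames (int Q) n" and d = zero_vec
      and E = "\<lambda>j a. {v \<in> vecs_mod (int Q) (2 * n). (\<forall>i<j. symp (int Q) n (a i) v = 0)
        \<and> indep_mod (int Q) (2 * n) (Suc j) (a(j := v))}"])
  show "isotropic_frames (int Q) n 0 = {\<lambda>_. zero_vec}"
    unfolding isotropic_frames_def indep_frames_def indep_mod_def by auto
  show "finite (isotropic_frames (int Q) n j)" for j by (rule finite_isotropic_frames)
  show "b \<in> isotropic_frames (int Q) n (Suc j) \<longleftrightarrow> b(j := zero_vec) \<in> isotropic_frames (int Q) n j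
     \<and> b j \<in> {v \<in> vecs_mod (int Q) (2 * n). (\<forall>i<j. symp (int Q) n ((b(j := zero_vec)) i) v = 0)
        \<and> indep_mod (int Q) (2 * n) (Suc j) ((b(j := zero_vec))(j := v))}" for j b
    by (rule isotropic_frames_Suc_iff)
  show "a j = zero_vec" if "a \<in> isotropic_frames (int Q) n j" for a j
    using that indep_frames_vanish unfolding isotropic_frames_def by blast
  show "\<forall>j<m. \<forall>a\<in>isotropic_frames (int Q) n j.
      finite {v \<in> vecs_mod (int Q) (2 * n). (\<forall>i<j. symp (int Q) n (a i) v = 0)
        \<and> indep_mod (int Q) (2 * n) (Suc j) (a(j := v))}
    \<and> real (card {v \<in> vecs_mod (int Q) (2 * n). (\<forall>i<j. symp (int Q) n (a i) v = 0)
        \<and> indep_mod (int Q) (2 * n) (Suc j) (a(j := v))})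
      = real Q ^ j * unimodular_count Q (2 * n - j - j)"
  proof (intro allI impI ballI conjI)
    fix j a assume "j < m" "a \<in> isotropic_frames (int Q) n j"
    then show "real (card {v \<in> vecs_mod (int Q) (2 * n). (\<forall>i<j. symp (int Q) n (a i) v = 0)
        \<and> indep_mod (int Q) (2 * n) (Suc j) (a(j := v))})
      = real Q ^ j * unimodular_count Q (2 * n - j - j)"
      using mn
        by (intro card_isotropic_extensions[OF Q])
          (auto simp: isotropic_frames_def indep_frames_def)
  qed (simp add: finite_vecs_mod)
qed

section \<open>Counting codes\<close>

definition span_mod :: "int \<Rightarrow> nat \<Rightarrow> nat \<Rightarrow> (nat \<Rightarrow> nat \<Rightarrow> int) \<Rightarrow> (nat \<Rightarrow> int) set" where
  "span_mod q N m a = {lcomb q N m x a | x. True}"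

lemma span_mod_eq_image: "q > 0 \<Longrightarrow> span_mod q N m a = (\<lambda>x. lcomb q N m x a) ` vecs_mod q m"
  unfolding span_mod_def using lcomb_reduce_coeffs reduce_in_vecs_mod by (auto, metis image_eqI)

lemma finite_span_mod: "q > 0 \<Longrightarrow> finite (span_mod q N m a)"
  by (simp add: span_mod_eq_image finite_vecs_mod)

lemma card_span_mod:
  assumes "Q > 0" and ind: "indep_mod (int Q) N m a"
  shows "card (span_mod (int Q) N m a) = Q ^ m"
proof -
  have "inj_on (\<lambda>x. lcomb (int Q) N m x a) (vecs_mod (int Q) m)"
    using indep_mod_lcomb_inj[OF ind] by (intro inj_onI)
  then show ?thesis using assms by (simp add: span_mod_eq_image card_image card_vecs_mod)
qed

lemma zvec_eq_vecs_mod: "zvec q n = vecs_mod q (2 * n)"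
  by (auto simp: zvec_def vecs_mod_iff)

lemma lincomb_eq_lcomb: "lincomb q n m x a = lcomb q (2 * n) m x a"
  unfolding lincomb_def lcomb_def reduce_def ..

lemma zindep_eq_indep_mod: "zindep q n m a = indep_mod q (2 * n) m a"
  unfolding zindep_def indep_mod_def lincomb_eq_lcomb ..

lemma zspan_eq_span_mod: "zspan q n m a = span_mod q (2 * n) m a"
  unfolding zspan_def span_mod_def lincomb_eq_lcomb ..

lemma stab_codes_eq_image:
  "stab_codes n k q = span_mod q (2 * n) (n - k) ` isotropic_frames q n (n - k)"
proof (rule set_eqI, rule iffI)
  fix C assume "C \<in> stab_codes n k q"
  then obtain a where a: "\<forall>j<n - k. a j \<in> vecs_mod q (2 * n)" "indep_mod q (2 * n) (n - k) a"
    "\<forall>j<n - k. \<forall>l<n - k. symp q n (a j) (a l) = 0" "C = span_mod q (2 * n) (n - k) a"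
    unfolding stab_codes_def zvec_eq_vecs_mod zindep_eq_indep_mod zspan_eq_span_mod by auto
  define a' where "a' j = (if j < n - k then a j else zero_vec)" for j
  have agree: "\<And>j. j < n - k \<Longrightarrow> a' j = a j" unfolding a'_def by simp
  have "a' \<in> isotropic_frames q n (n - k)"
    using a indep_mod_cong[of "n - k" a' a, OF agree]
    unfolding isotropic_frames_def indep_frames_def by (auto simp: a'_def)
  moreover have "C = span_mod q (2 * n) (n - k) a'"
    using a(4) lcomb_cong[of "n - k" a' a, OF agree] unfolding span_mod_def by simp
  ultimately show "C \<in> span_mod q (2 * n) (n - k) ` isotropic_frames q n (n - k)" by blast
next
  fix C assume "C \<in> span_mod q (2 * n) (n - k) ` isotropic_frames q n (n - k)"
  then show "C \<in> stab_codes n k q"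
    unfolding stab_codes_def zvec_eq_vecs_mod zindep_eq_indep_mod zspan_eq_span_mod
      isotropic_frames_def indep_frames_def by blast
qed

text \<open>The frames spanning the same module as \<open>a\<^sub>0\<close> are exactly its images under the invertible
  \<open>s \<times> s\<close> matrices, that is, the rows \<open>x\<close> of an element of \<^term>\<open>indep_frames q s s\<close>.\<close>

definition rebase :: "int \<Rightarrow> nat \<Rightarrow> nat \<Rightarrow> (nat \<Rightarrow> nat \<Rightarrow> int) \<Rightarrow>
    (nat \<Rightarrow> nat \<Rightarrow> int) \<Rightarrow> nat \<Rightarrow> nat \<Rightarrow> int" where
  "rebase q N s a0 x = (\<lambda>j. if j < s then lcomb q N s (x j) a0 else zero_vec)"

lemma lcomb_rebase: "lcomb q N s z (rebase q N s a0 x) = lcomb q N s (\<lambda>i. \<Sum>j<s. z j * x j i) a0"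
proof -
  have "lcomb q N s z (rebase q N s a0 x) = lcomb q N s z (\<lambda>j. lcomb q N s (x j) a0)"
    unfolding rebase_def by (rule lcomb_cong) simp
  then show ?thesis by (simp add: lcomb_lcomb)
qed

context
  fixes Q n s :: nat and a0 :: "nat \<Rightarrow> nat \<Rightarrow> int"
  assumes Q: "Q > 1" and a0: "a0 \<in> isotropic_frames (int Q) n s"
begin

private lemma q_pos: "int Q > 0"
  using Q by simp

private lemma a0_indep: "indep_mod (int Q) (2 * n) s a0"
  using a0 unfolding isotropic_frames_def indep_frames_def by simp

lemma rebase_in_isotropic_frames:
  assumes x: "x \<in> indep_frames (int Q) s s"
  shows "rebase (int Q) (2 * n) s a0 x \<in> isotropic_frames (int Q) n s"
    and "span_mod (int Q) (2 * n) s (rebase (int Q) (2 * n) s a0 x) = span_mod (int Q) (2 * n) s a0"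
proof -
  let ?a = "rebase (int Q) (2 * n) s a0 x"
  have ind: "indep_mod (int Q) (2 * n) s ?a"
    unfolding indep_mod_def
  proof (rule allI, rule impI)
    fix z assume "lcomb (int Q) (2 * n) s z ?a = zero_vec"
    then have zero: "lcomb (int Q) (2 * n) s (\<lambda>i. \<Sum>j<s. z j * x j i) a0 = zero_vec"
      by (simp add: lcomb_rebase)
    have "(\<Sum>j<s. z j * x j i) mod int Q = 0" if "i < s" for i
      using indep_modD[OF a0_indep zero that] by simp
    then have "lcomb (int Q) s s z x = zero_vec" unfolding lcomb_eq_zero_iff by blast
    then show "\<forall>j<s. z j mod int Q = 0"
      using x indep_modD unfolding indep_frames_def by blast
  qed
  have iso: "\<forall>i<s. \<forall>l<s. symp (int Q) n (?a i) (?a l) = 0"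
    using a0 symp_lcomb_isotropic[of s "int Q" n a0]
    unfolding rebase_def isotropic_frames_def by simp
  show "?a \<in> isotropic_frames (int Q) n s"
    using ind iso lcomb_in_vecs_mod[OF q_pos]
    unfolding isotropic_frames_def indep_frames_def rebase_def by auto
  have "span_mod (int Q) (2 * n) s ?a \<subseteq> span_mod (int Q) (2 * n) s a0"
    unfolding span_mod_def by (auto simp: lcomb_rebase)
  moreover have "card (span_mod (int Q) (2 * n) s ?a) = card (span_mod (int Q) (2 * n) s a0)"
    using card_span_mod ind a0_indep Q by simp
  ultimately show "span_mod (int Q) (2 * n) s ?a = span_mod (int Q) (2 * n) s a0"
    using card_subset_eq[OF finite_span_mod[OF q_pos]] by blast
qed

lemma inj_on_rebase: "inj_on (rebase (int Q) (2 * n) s a0) (indep_frames (int Q) s s)"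
proof (rule inj_onI)
  fix x x' assume x: "x \<in> indep_frames (int Q) s s" and x': "x' \<in> indep_frames (int Q) s s"
    and eq: "rebase (int Q) (2 * n) s a0 x = rebase (int Q) (2 * n) s a0 x'"
  show "x = x'"
  proof
    fix j show "x j = x' j"
    proof (cases "j < s")
      case True
      then have "lcomb (int Q) (2 * n) s (x j) a0 = lcomb (int Q) (2 * n) s (x' j) a0"
        using fun_cong[OF eq, of j] by (simp add: rebase_def)
      then show ?thesis
        using indep_mod_lcomb_inj[OF a0_indep] x x' True unfolding indep_frames_def by blast
    next
      case False
      then show ?thesis using x x' unfolding indep_frames_def by simp
    qed
  qed
qed

lemma rebase_surj:
  assumes a: "a \<in> isotropic_frames (int Q) n s"
    and span: "span_mod (int Q) (2 * n) s a = span_mod (int Q) (2 * n) s a0"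
  shows "a \<in> rebase (int Q) (2 * n) s a0 ` indep_frames (int Q) s s"
proof -
  have a_vecs: "\<And>i. i < s \<Longrightarrow> a i \<in> vecs_mod (int Q) (2 * n)" and a_zero: "\<And>i. s \<le> i \<Longrightarrow> a i = zero_vec"
    and a_ind: "indep_mod (int Q) (2 * n) s a"
    using a unfolding isotropic_frames_def indep_frames_def by auto
  have "\<exists>y. a j = lcomb (int Q) (2 * n) s y a0" if "j < s" for j
  proof -
    have "a j = lcomb (int Q) (2 * n) s (unit_vec j) a"
      by (rule sym, rule lcomb_unit_vec_coeffs) (use a_vecs that in auto)
    then have "a j \<in> span_mod (int Q) (2 * n) s a" unfolding span_mod_def by blast
    then show ?thesis using span unfolding span_mod_def by auto
  qed
  then obtain y where y: "\<And>j. j < s \<Longrightarrow> a j = lcomb (int Q) (2 * n) s (y j) a0" by metis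
  define x where "x j = (if j < s then reduce (int Q) s (y j) else zero_vec)" for j
  have ax: "rebase (int Q) (2 * n) s a0 x = a"
  proof
    fix j show "rebase (int Q) (2 * n) s a0 x j = a j"
      using y a_zero by (simp add: rebase_def x_def lcomb_reduce_coeffs)
  qed
  have "indep_mod (int Q) s s x"
    unfolding indep_mod_def
  proof (rule allI, rule impI)
    fix z assume "lcomb (int Q) s s z x = zero_vec"
    then have "lcomb (int Q) (2 * n) s (\<lambda>i. \<Sum>j<s. z j * x j i) a0 = zero_vec"
      by (intro lcomb_zero_coeffs) (simp add: lcomb_eq_zero_iff)
    then have "lcomb (int Q) (2 * n) s z a = zero_vec" using ax lcomb_rebase by metis
    then show "\<forall>j<s. z j mod int Q = 0" using indep_modD[OF a_ind] by blast
  qed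
  then have "x \<in> indep_frames (int Q) s s"
    unfolding indep_frames_def x_def using reduce_in_vecs_mod[OF q_pos] by auto
  then show ?thesis using ax by blast
qed

lemma card_frames_with_span:
  "card {a \<in> isotropic_frames (int Q) n s.
      span_mod (int Q) (2 * n) s a = span_mod (int Q) (2 * n) s a0}
    = card (indep_frames (int Q) s s)"
proof -
  have "{a \<in> isotropic_frames (int Q) n s.
      span_mod (int Q) (2 * n) s a = span_mod (int Q) (2 * n) s a0}
      = rebase (int Q) (2 * n) s a0 ` indep_frames (int Q) s s"
    using rebase_in_isotropic_frames rebase_surj by blast
  then show ?thesis using inj_on_rebase by (simp add: card_image)
qed

end

lemma card_isotropic_frames_eq:
  fixes Q :: nat
  assumes Q: "Q > 1"
  shows "card (isotropic_frames (int Q) n (n - k))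
    = card (stab_codes n k (int Q)) * card (indep_frames (int Q) (n - k) (n - k))"
  unfolding stab_codes_eq_image
proof (rule card_eq_card_image_mult_fibre[OF finite_isotropic_frames])
  fix C assume "C \<in> span_mod (int Q) (2 * n) (n - k) ` isotropic_frames (int Q) n (n - k)"
  then obtain a0 where "a0 \<in> isotropic_frames (int Q) n (n - k)"
    "C = span_mod (int Q) (2 * n) (n - k) a0"
    by blast
  then show "card {a \<in> isotropic_frames (int Q) n (n - k). span_mod (int Q) (2 * n) (n - k) a = C}
      = card (indep_frames (int Q) (n - k) (n - k))"
    using card_frames_with_span[OF Q] by simp
qed

definition code_exponent :: "nat \<Rightarrow> nat \<Rightarrow> nat" where
  "code_exponent n k = (\<Sum>j<n - k. n + k - j)"

lemma two_code_exponent: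
  assumes "k < n"
  shows "2 * code_exponent n k = (n - k) * (n + 3 * k + 1)"
proof -
  have "2 * (\<Sum>j<s. s + 2 * k - j) = s * (s + 4 * k + 1)" for s
  proof (induction s)
    case (Suc s)
    have "(\<Sum>j<Suc s. Suc s + 2 * k - j) = (\<Sum>j<s. (s + 2 * k - j) + 1) + (2 * k + 1)"
      by (simp add: Suc_diff_le)
    also have "\<dots> = (\<Sum>j<s. s + 2 * k - j) + s + (2 * k + 1)"
      by (simp only: sum.distrib sum_constant card_lessThan) simp
    finally show ?case using Suc by (simp add: algebra_simps)
  qed simp
  from this[of "n - k"] assms show ?thesis
    unfolding code_exponent_def by (simp add: algebra_simps)
qed

definition zeta :: "nat \<Rightarrow> nat \<Rightarrow> nat \<Rightarrow> real" where
  "zeta n k p = (\<Prod>j<n - k. (1 - 1 / real p ^ (2 * (n - j))) / (1 - 1 / real p ^ (n - k - j)))"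

lemma prod_prime_factors_pos: "t > 0 \<Longrightarrow> (\<Prod>p\<in>prime_factors Q. 1 - 1 / real p ^ t) > 0"
proof (rule prod_pos)
  fix p assume t: "t > 0" and "p \<in> prime_factors Q"
  then have "prime p" by (simp add: in_prime_factors_iff)
  then have "real p > 1" using prime_gt_1_nat by simp
  then have "real p ^ t > 1" using t by (rule one_less_power)
  then have "1 / real p ^ t < 1" by (simp add: divide_less_eq)
  then show "1 - 1 / real p ^ t > 0" by simp
qed

lemma real_Ncodes:
  fixes Q :: nat
  assumes Q: "Q > 1" and kn: "k < n"
  shows "real (Ncodes n k Q) = real Q ^ code_exponent n k * (\<Prod>p\<in>prime_factors Q. zeta n k p)"
proof -
  let ?s = "n - k"
  let ?P = "\<lambda>t. \<Prod>p\<in>prime_factors Q. 1 - 1 / real p ^ t"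
  have frames: "real (card (isotropic_frames (int Q) n ?s)) = real (Ncodes n k Q)
      * real (card (indep_frames (int Q) ?s ?s))"
    using card_isotropic_frames_eq[OF Q, of n k] unfolding Ncodes_def by simp
  have factor: "(real Q ^ j * unimodular_count Q (2 * n - j - j))
      / (real Q ^ j * unimodular_count Q (?s - j))
      = real Q ^ (n + k - j) * (?P (2 * (n - j)) / ?P (n - k - j))" if "j < ?s" for j
  proof -
    have e: "2 * n - j - j = 2 * (n - j)" "2 * (n - j) = (n + k - j) + (?s - j)" using that kn
      by auto
    have pow: "real Q ^ (2 * (n - j)) = real Q ^ (n + k - j) * real Q ^ (?s - j)"
      unfolding e(2) by (rule power_add)
    have "real Q ^ j > 0" "real Q ^ (?s - j) > 0" using Q by simp_all
    moreover have "?P (?s - j) > 0" using that by (intro prod_prime_factors_pos) simp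
    ultimately show ?thesis using Q unfolding unimodular_count_def e(1) pow
      by (simp add: field_simps)
  qed
  have "real (card (indep_frames (int Q) ?s ?s)) > 0"
    unfolding card_indep_frames[OF Q order_refl] unimodular_count_def
    using Q by (intro prod_pos mult_pos_pos prod_prime_factors_pos) auto
  then have "real (Ncodes n k Q) = real (card (isotropic_frames (int Q) n ?s))
      / real (card (indep_frames (int Q) ?s ?s))"
    using frames by (simp add: field_simps)
  also have "\<dots> = (\<Prod>j<?s. (real Q ^ j * unimodular_count Q (2 * n - j - j))
      / (real Q ^ j * unimodular_count Q (?s - j)))"
    unfolding card_isotropic_frames[OF Q diff_le_self] card_indep_frames[OF Q order_refl]
    by (rule prod_dividef[symmetric])
  also have "\<dots> = (\<Prod>j<?s. real Q ^ (n + k - j) * (?P (2 * (n - j)) / ?P (n - k - j)))"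
    using factor by (intro prod.cong) auto
  also have "\<dots> = real Q ^ code_exponent n k * (\<Prod>p\<in>prime_factors Q. zeta n k p)"
    unfolding code_exponent_def zeta_def
    by (simp add: power_sum prod.distrib prod_dividef[symmetric] prod.swap[of _ "prime_factors Q"])
  finally show ?thesis .
qed

lemma prime_factors_prime_power: "prime p \<Longrightarrow> m > 0 \<Longrightarrow> prime_factors (p ^ m) = {p}"
  by (simp add: prime_factorization_prime_power)

lemma Ncodes_multiplicative:
  assumes d: "d > 1" and kn: "k < n"
  shows "Ncodes n k d = (\<Prod>p\<in>prime_factors d. Ncodes n k (p ^ multiplicity p d))"
proof -
  have "real (Ncodes n k (p ^ multiplicity p d)) = (real p ^ multiplicity p d) ^ code_exponent n k
      * zeta n k p"
    if p: "p \<in> prime_factors d" for p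
  proof -
    have "prime p" "multiplicity p d > 0" using p d by (auto simp: prime_factors_multiplicity)
    moreover from this have "p ^ multiplicity p d > 1" by (intro one_less_power prime_gt_1_nat)
    ultimately show ?thesis using real_Ncodes[OF _ kn] by (simp add: prime_factors_prime_power)
  qed
  then have "real (\<Prod>p\<in>prime_factors d. Ncodes n k (p ^ multiplicity p d))
      = (\<Prod>p\<in>prime_factors d. real p ^ multiplicity p d) ^ code_exponent n k
        * (\<Prod>p\<in>prime_factors d. zeta n k p)"
    by (simp add: prod.distrib prod_power_distrib)
  also have "(\<Prod>p\<in>prime_factors d. real p ^ multiplicity p d) = real d"
    using d prime_factorization_nat[of d] by (simp flip: of_nat_prod of_nat_power)
  finally show ?thesis using real_Ncodes[OF d kn] by (simp only: of_nat_eq_iff)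
qed

lemma powr_code_exponent:
  assumes "k < n" and "x > 0"
  shows "x powr (real ((n - k) * (n + 3 * k + 1)) / 2) = x ^ code_exponent n k"
proof -
  have "real ((n - k) * (n + 3 * k + 1)) / 2 = real (code_exponent n k)"
    using two_code_exponent[OF assms(1)] by (simp flip: of_nat_mult)
  then show ?thesis using assms(2) by (simp add: powr_realpow)
qed

lemma zeta_eq_powr:
  assumes "p > 0"
  shows "zeta n k p
    = (\<Prod>j<n - k. (1 - real p powr (- real (2 * (n - j)))) / (1 - real p powr (- real (n - k - j))))"
proof -
  have inverse_power: "real p powr (- real t) = 1 / real p ^ t" for t
    using assms by (simp add: powr_minus powr_realpow divide_inverse)
  show ?thesis unfolding zeta_def by (simp only: inverse_power)
qed

theorem theorem2:
  fixes d n k :: nat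
  assumes "d \<ge> 2" and "n \<ge> 1" and "k < n"
  shows "Ncodes n k d = (\<Prod>p\<in>prime_factors d. Ncodes n k (p ^ multiplicity p d))
    \<and> real (Ncodes n k d) =
        real d powr (real ((n-k) * (n + 3*k + 1)) / 2)
        * (\<Prod>p\<in>prime_factors d. \<Prod>j<n-k.
             (1 - real p powr (- real (2*(n-j)))) / (1 - real p powr (- real (n-k-j))))"
proof
  have d: "d > 1" using assms(1) by simp
  show "Ncodes n k d = (\<Prod>p\<in>prime_factors d. Ncodes n k (p ^ multiplicity p d))"
    by (rule Ncodes_multiplicative[OF d assms(3)])
  have power: "real d powr (real ((n-k) * (n + 3*k + 1)) / 2) = real d ^ code_exponent n k"
    using d by (intro powr_code_exponent[OF assms(3)]) simp
  have "(\<Prod>p\<in>prime_factors d. zeta n k p) = (\<Prod>p\<in>prime_factors d. \<Prod>j<n-k.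
      (1 - real p powr (- real (2*(n-j)))) / (1 - real p powr (- real (n-k-j))))"
    by (intro prod.cong refl zeta_eq_powr) (simp add: in_prime_factors_iff prime_gt_0_nat)
  then show "real (Ncodes n k d) = real d powr (real ((n-k) * (n + 3*k + 1)) / 2)
        * (\<Prod>p\<in>prime_factors d. \<Prod>j<n-k.
             (1 - real p powr (- real (2*(n-j)))) / (1 - real p powr (- real (n-k-j))))"
    unfolding power using real_Ncodes[OF d assms(3)] by (simp only:)
qed

end
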